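(* Let $n\geqslant 1$ and let $G_n$ be the complete directed graph on $n$ vertices. Then $\Delta(G_n)$ is the union of a family of $(n-1)^{n-1}$ subcomplexes, each of which is a simplicial sphere of dimension $n-2$; moreover, for each $0<k<n$, exactly $$\frac{(n-1)!}{(n-k-1)!}\,k\,(n-1)^{n-k-2}$$ members of this family are (combinatorially) the $(n-k-1)$-fold bipyramid over the boundary of the $k$-simplex.
   Context: $G_n$ has vertex set $[n]$ and a directed edge $\overrightarrow{xy}$ for every ordered pair $x\neq y$. For a finite directed graph $D$, the complex of directed trees $\Delta(D)$ has the directed edges of $D$ as vertices, and its faces are the edge sets of directed forests in $D$ (vertex-disjoint unions of rooted directed trees; equivalently, edge sets in which every vertex has in-degree at most $1$ and there is no directed cycle). For a simplicial complex $K$ and $m\geqslant 0$, the $m$-fold bipyramid over $K$ is the join $K*S^0*\cdots*S^0$ with $m$ copies of $S^0$, where $S^0$ denotes the complex consisting of two vertices and no edge; the boundary of the $k$-simplex is the complex of all proper subsets of a $(k+1)$-element set. *)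

theory Defs
  imports "HOL-Analysis.Analysis"
begin

text \<open>Abstract simplicial complexes are represented by their set of faces
  (a downward closed family of finite sets, containing the empty face).\<close>

definition simplicial_complex :: "'a set set \<Rightarrow> bool" where
  "simplicial_complex K \<longleftrightarrow> K \<noteq> {} \<and> (\<forall>\<sigma>\<in>K. finite \<sigma>) \<and> (\<forall>\<sigma>\<in>K. \<forall>\<tau>. \<tau> \<subseteq> \<sigma> \<longrightarrow> \<tau> \<in> K)"

definition subcomplex :: "'a set set \<Rightarrow> 'a set set \<Rightarrow> bool" where
  "subcomplex L K \<longleftrightarrow> simplicial_complex L \<and> L \<subseteq> K"

text \<open>Geometric realization: points are barycentric coordinate functions
  whose support is a face; topology induced from the product topology.\<close>

definition realization :: "'a set set \<Rightarrow> ('a \<Rightarrow> real) topology" where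
  "realization K = subtopology (powertop_real UNIV)
     {f. (\<forall>v. 0 \<le> f v) \<and> finite {v. f v \<noteq> 0} \<and> {v. f v \<noteq> 0} \<in> K
         \<and> sum f {v. f v \<noteq> 0} = 1}"

text \<open>Simplicial sphere of dimension d (d = -1 allowed: the complex with only
  the empty face).\<close>

definition simplicial_sphere :: "'a set set \<Rightarrow> int \<Rightarrow> bool" where
  "simplicial_sphere K d \<longleftrightarrow> simplicial_complex K \<and>
     (if d < 0 then d = -1 \<and> K = {{}}
      else realization K homeomorphic_space nsphere (nat d))"

definition simp_iso :: "'a set set \<Rightarrow> 'b set set \<Rightarrow> bool" where
  "simp_iso K L \<longleftrightarrow> (\<exists>f. inj_on f (\<Union>K) \<and> (\<lambda>\<sigma>. f ` \<sigma>) ` K = L)"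

definition complete_digraph_edges :: "nat \<Rightarrow> (nat \<times> nat) set" where
  "complete_digraph_edges n = {(x, y). x \<in> {1..n} \<and> y \<in> {1..n} \<and> x \<noteq> y}"

definition directed_forest :: "(nat \<times> nat) set \<Rightarrow> bool" where
  "directed_forest E \<longleftrightarrow> (\<forall>x x' y. (x, y) \<in> E \<and> (x', y) \<in> E \<longrightarrow> x = x') \<and> acyclic E"

definition tree_complex :: "nat \<Rightarrow> (nat \<times> nat) set set" where
  "tree_complex n = {E. E \<subseteq> complete_digraph_edges n \<and> directed_forest E}"

definition simplex_boundary :: "nat \<Rightarrow> nat set set" where
  "simplex_boundary k = {\<sigma>. \<sigma> \<subset> {0..k}}"

definition join :: "'a set set \<Rightarrow> 'b set set \<Rightarrow> ('a + 'b) set set" where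
  "join K L = {Inl ` \<sigma> \<union> Inr ` \<tau> | \<sigma> \<tau>. \<sigma> \<in> K \<and> \<tau> \<in> L}"

text \<open>The m-fold join S^0 * ... * S^0: the i-th copy of S^0 has vertices (i,True), (i,False).\<close>

definition iterated_S0_join :: "nat \<Rightarrow> (nat \<times> bool) set set" where
  "iterated_S0_join m = {B. B \<subseteq> {..<m} \<times> UNIV \<and> (\<forall>i. \<not> ((i, True) \<in> B \<and> (i, False) \<in> B))}"

definition bipyramid :: "'a set set \<Rightarrow> nat \<Rightarrow> ('a + nat \<times> bool) set set" where
  "bipyramid K m = join K (iterated_S0_join m)"

end

theory Submission
  imports Defs
begin

text \<open>The cells of the cover are indexed by a directed cycle \<open>n \<rightarrow> x\<^sub>1 \<rightarrow> \<dots> \<rightarrow> x\<^sub>k \<rightarrow> n\<close> through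
  the vertex \<open>n\<close> and a rooted forest \<open>p\<close> on the remaining vertices \<open>B\<close> of \<open>[n-1]\<close> whose roots
  are attached to the cycle. The cell consists of the forests among the cycle edges and the
  edges \<open>(p y, y)\<close>, \<open>(n, y)\<close> for \<open>y \<in> B\<close>. Such an edge set is a forest exactly when it omits a
  cycle edge and, for each \<open>y\<close>, one of \<open>(p y, y)\<close> and \<open>(n, y)\<close>; so the cell is the
  \<open>(n-k-1)\<close>-fold bipyramid over the boundary of the \<open>k\<close>-simplex, an \<open>(n-2)\<close>-sphere.

  Every forest lies in a cell: follow the parents of \<open>n\<close> up to a root \<open>r\<close> and close this path
  into the cycle by the edge \<open>(n, r)\<close>, which the forest lacks (if \<open>n\<close> has no parent, use a
  2-cycle through a vertex that can only have \<open>n\<close> as parent); the other vertices hang from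
  their parents. The cell determines its cycle and forest, and the generalised Cayley formula
  \<open>a (a + b)^(b - 1)\<close> for forests on \<open>b\<close> vertices rooted in \<open>a\<close> given ones counts
  \<open>(n-1)!/(n-k-1)! \<cdot> k (n-1)^(n-k-2)\<close> cells with a cycle of length \<open>k + 1\<close>. These numbers
  telescope to \<open>(n-1)^(n-1)\<close>.\<close>

section \<open>Realizations\<close>

definition realization_carrier :: "'a set set \<Rightarrow> ('a \<Rightarrow> real) set" where
  "realization_carrier K = {f. (\<forall>v. 0 \<le> f v) \<and> finite {v. f v \<noteq> 0} \<and> {v. f v \<noteq> 0} \<in> K
         \<and> sum f {v. f v \<noteq> 0} = 1}"

lemma realization_eq_subtopology:
  "realization K = subtopology (powertop_real UNIV) (realization_carrier K)"
  unfolding realization_def realization_carrier_def by simp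

lemma topspace_realization: "topspace (realization K) = realization_carrier K"
  unfolding realization_eq_subtopology by simp

lemma continuous_map_coordinate:
  "continuous_map (subtopology (powertop_real UNIV) S) euclideanreal (\<lambda>x. x v)"
  by (rule continuous_map_from_subtopology[OF continuous_map_product_projection]) simp

lemma continuous_map_into_realization:
  assumes "\<And>v. continuous_map X euclideanreal (\<lambda>x. g x v)"
    and "g \<in> topspace X \<rightarrow> realization_carrier K"
  shows "continuous_map X (realization K) g"
  using assms unfolding realization_eq_subtopology continuous_map_in_subtopology
    continuous_map_componentwise_UNIV by blast

section \<open>Isomorphic complexes have homeomorphic realizations\<close>

definition transport :: "('a \<Rightarrow> 'b) \<Rightarrow> 'a set \<Rightarrow> ('a \<Rightarrow> real) \<Rightarrow> 'b \<Rightarrow> real" where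
  "transport f U \<phi> v = (if v \<in> f ` U then \<phi> (inv_into U f v) else 0)"

lemma transport_image:
  assumes "inj_on f U" "u \<in> U"
  shows "transport f U \<phi> (f u) = \<phi> u"
  using assms by (simp add: transport_def)

lemma support_transport:
  assumes f: "inj_on f U" and supp: "{u. \<phi> u \<noteq> 0} \<subseteq> U"
  shows "{v. transport f U \<phi> v \<noteq> 0} = f ` {u. \<phi> u \<noteq> 0}"
proof -
  have "v \<in> f ` {u. \<phi> u \<noteq> 0}" if "transport f U \<phi> v \<noteq> 0" for v
  proof -
    from that obtain u where "u \<in> U" "v = f u" by (auto simp: transport_def split: if_splits)
    then show ?thesis using that f by (auto simp: transport_image)
  qed
  then show ?thesis using f supp by (auto simp: transport_image subset_iff)
qed

lemma transport_realization_carrier: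
  assumes f: "inj_on f (\<Union>K)" "(\<lambda>\<sigma>. f ` \<sigma>) ` K = L" and \<phi>: "\<phi> \<in> realization_carrier K"
  shows "transport f (\<Union>K) \<phi> \<in> realization_carrier L"
proof -
  let ?S = "{u. \<phi> u \<noteq> 0}"
  have S: "?S \<in> K" "finite ?S" "sum \<phi> ?S = 1" "\<forall>u. 0 \<le> \<phi> u"
    using \<phi> unfolding realization_carrier_def by auto
  have SU: "?S \<subseteq> \<Union>K" using S(1) by auto
  have supp: "{v. transport f (\<Union>K) \<phi> v \<noteq> 0} = f ` ?S"
    by (rule support_transport[OF f(1) SU])
  have "sum (transport f (\<Union>K) \<phi>) (f ` ?S) = sum \<phi> ?S"
    using inj_on_subset[OF f(1) SU] SU
    by (simp add: sum.reindex transport_image[OF f(1)] subset_iff)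
  moreover have "\<forall>v. 0 \<le> transport f (\<Union>K) \<phi> v" using S(4) by (simp add: transport_def)
  ultimately show ?thesis
    unfolding realization_carrier_def mem_Collect_eq supp using S f(2) by auto
qed

lemma continuous_map_transport:
  assumes "inj_on f (\<Union>K)" "(\<lambda>\<sigma>. f ` \<sigma>) ` K = L"
  shows "continuous_map (realization K) (realization L) (transport f (\<Union>K))"
proof (rule continuous_map_into_realization)
  show "continuous_map (realization K) euclideanreal (\<lambda>\<phi>. transport f (\<Union>K) \<phi> v)" for v
    unfolding realization_eq_subtopology transport_def
    by (cases "v \<in> f ` \<Union>K") (simp_all add: continuous_map_coordinate)
  show "transport f (\<Union>K) \<in> topspace (realization K) \<rightarrow> realization_carrier L"
    using transport_realization_carrier[OF assms] by (auto simp: topspace_realization)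
qed

lemma transport_inv_into_transport:
  assumes "inj_on f U" "{u. \<phi> u \<noteq> 0} \<subseteq> U"
  shows "transport (inv_into U f) (f ` U) (transport f U \<phi>) = \<phi>"
proof
  fix u
  show "transport (inv_into U f) (f ` U) (transport f U \<phi>) u = \<phi> u"
  proof (cases "u \<in> U")
    case True
    then have "u = inv_into U f (f u)" using assms(1) by simp
    moreover have "inj_on (inv_into U f) (f ` U)" by (simp add: inj_on_inv_into)
    ultimately have "transport (inv_into U f) (f ` U) (transport f U \<phi>) u = transport f U \<phi> (f u)"
      using True by (metis image_eqI transport_image)
    then show ?thesis using True assms(1) by (simp add: transport_image)
  next
    case False
    then show ?thesis using assms by (auto simp: transport_def image_image)
  qed
qed

lemma transport_transport_inv_into:
  assumes "inj_on f U" "{v. \<psi> v \<noteq> 0} \<subseteq> f ` U"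
  shows "transport f U (transport (inv_into U f) (f ` U) \<psi>) = \<psi>"
proof
  fix v
  show "transport f U (transport (inv_into U f) (f ` U) \<psi>) v = \<psi> v"
  proof (cases "v \<in> f ` U")
    case True
    then obtain u where u: "u \<in> U" "v = f u" by blast
    have "inv_into U f v = u" "inj_on (inv_into U f) (f ` U)"
      using u assms(1) by (simp_all add: inj_on_inv_into)
    then have "transport (inv_into U f) (f ` U) \<psi> u = \<psi> v"
      using True transport_image by metis
    then show ?thesis using u assms(1) by (simp add: transport_image)
  next
    case False
    then show ?thesis using assms(2) by (auto simp: transport_def)
  qed
qed

lemma inv_into_simp_iso:
  assumes f: "inj_on f (\<Union>K)" "(\<lambda>\<sigma>. f ` \<sigma>) ` K = L"
  shows "inj_on (inv_into (\<Union>K) f) (\<Union>L)" "(\<lambda>\<tau>. inv_into (\<Union>K) f ` \<tau>) ` L = K"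
proof -
  have "\<Union>L = f ` \<Union>K" using f(2) by auto
  then show "inj_on (inv_into (\<Union>K) f) (\<Union>L)" by (simp add: inj_on_inv_into)
  have "inv_into (\<Union>K) f ` f ` \<sigma> = \<sigma>" if "\<sigma> \<in> K" for \<sigma>
    by (rule inv_into_image_cancel[OF f(1)]) (use that in auto)
  then show "(\<lambda>\<tau>. inv_into (\<Union>K) f ` \<tau>) ` L = K" using f(2) by (auto simp: image_image)
qed

lemma simp_iso_sym:
  assumes "simp_iso K L" shows "simp_iso L K"
proof -
  obtain f where "inj_on f (\<Union>K)" "(\<lambda>\<sigma>. f ` \<sigma>) ` K = L"
    using assms unfolding simp_iso_def by blast
  from inv_into_simp_iso[OF this] show ?thesis unfolding simp_iso_def by blast
qed

lemma simp_iso_homeomorphic_realization: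
  assumes "simp_iso K L"
  shows "realization K homeomorphic_space realization L"
proof -
  obtain f where f: "inj_on f (\<Union>K)" "(\<lambda>\<sigma>. f ` \<sigma>) ` K = L"
    using assms unfolding simp_iso_def by blast
  let ?g = "inv_into (\<Union>K) f"
  have U: "\<Union>L = f ` \<Union>K" using f(2) by auto
  have supp: "{v. \<phi> v \<noteq> 0} \<subseteq> \<Union>M" if "\<phi> \<in> topspace (realization M)" for \<phi> and M :: "'c set set"
    using that by (auto simp: topspace_realization realization_carrier_def)
  show ?thesis
    unfolding homeomorphic_space_def homeomorphic_maps_def
  proof (intro exI conjI ballI)
    show "continuous_map (realization K) (realization L) (transport f (\<Union>K))"
      by (rule continuous_map_transport[OF f])
    show "continuous_map (realization L) (realization K) (transport ?g (\<Union>L))"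
      by (rule continuous_map_transport[OF inv_into_simp_iso[OF f]])
    show "transport ?g (\<Union>L) (transport f (\<Union>K) \<phi>) = \<phi>" if "\<phi> \<in> topspace (realization K)" for \<phi>
      unfolding U using transport_inv_into_transport[OF f(1) supp[OF that]] .
    show "transport f (\<Union>K) (transport ?g (\<Union>L) \<psi>) = \<psi>" if "\<psi> \<in> topspace (realization L)" for \<psi>
      unfolding U using transport_transport_inv_into[OF f(1)] supp[OF that] U by simp
  qed
qed

section \<open>Bipyramids over the boundary of a simplex\<close>

definition bipyramid_vertices :: "nat \<Rightarrow> nat \<Rightarrow> (nat + nat \<times> bool) set" where
  "bipyramid_vertices k m = Inl ` {..k} \<union> Inr ` ({..<m} \<times> UNIV)"

lemma Inl_mem_bipyramid_vertices [simp]: "Inl j \<in> bipyramid_vertices k m \<longleftrightarrow> j \<le> k"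
  by (auto simp: bipyramid_vertices_def)

lemma Inr_mem_bipyramid_vertices [simp]: "Inr (i, b) \<in> bipyramid_vertices k m \<longleftrightarrow> i < m"
  by (auto simp: bipyramid_vertices_def)

lemma finite_bipyramid_vertices [simp]: "finite (bipyramid_vertices k m)"
  by (simp add: bipyramid_vertices_def)

lemma card_bipyramid_vertices: "card (bipyramid_vertices k m) = Suc k + 2 * m"
proof -
  have "card (bipyramid_vertices k m)
      = card (Inl ` {..k} :: (nat + nat \<times> bool) set)
        + card (Inr ` ({..<m} \<times> UNIV) :: (nat + nat \<times> bool) set)"
    unfolding bipyramid_vertices_def by (rule card_Un_disjoint) auto
  also have "\<dots> = Suc k + 2 * m" by (simp add: card_image card_cartesian_product)
  finally show ?thesis .
qed

lemma sum_bipyramid_vertices: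
  "sum g (bipyramid_vertices k m)
     = (\<Sum>j\<le>k. g (Inl j)) + (\<Sum>i<m. g (Inr (i, True)) + g (Inr (i, False)))"
proof -
  have "sum g (bipyramid_vertices k m) = sum g (Inl ` {..k}) + sum g (Inr ` ({..<m} \<times> UNIV))"
    unfolding bipyramid_vertices_def by (rule sum.union_disjoint) auto
  also have "sum g (Inr ` ({..<m} \<times> UNIV)) = (\<Sum>i<m. \<Sum>b\<in>UNIV. g (Inr (i, b)))"
    by (simp add: sum.reindex sum.cartesian_product)
  finally show ?thesis by (simp add: sum.reindex UNIV_bool add.commute)
qed

lemma mem_bipyramid_simplex_boundary:
  "S \<in> bipyramid (simplex_boundary k) m \<longleftrightarrow>
     S \<subseteq> bipyramid_vertices k m \<and> \<not> Inl ` {..k} \<subseteq> S \<and>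
     (\<forall>i<m. \<not> (Inr (i, True) \<in> S \<and> Inr (i, False) \<in> S))"
  (is "?L \<longleftrightarrow> ?R")
proof
  assume ?L
  then obtain \<sigma> \<tau> where "S = Inl ` \<sigma> \<union> Inr ` \<tau>" "\<sigma> \<subset> {0..k}" "\<tau> \<in> iterated_S0_join m"
    unfolding bipyramid_def join_def simplex_boundary_def by auto
  then show ?R unfolding iterated_S0_join_def bipyramid_vertices_def by (auto simp: atLeast0AtMost)
next
  assume R: ?R
  have inW: "\<And>v. v \<in> S \<Longrightarrow> v \<in> bipyramid_vertices k m" using R by blast
  have "S = Inl ` {a. Inl a \<in> S} \<union> Inr ` {b. Inr b \<in> S}"
  proof (rule set_eqI)
    show "v \<in> S \<longleftrightarrow> v \<in> Inl ` {a. Inl a \<in> S} \<union> Inr ` {b. Inr b \<in> S}" for v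
      by (cases v) auto
  qed
  moreover have "{a. Inl a \<in> S} \<in> simplex_boundary k"
  proof -
    have "{a. Inl a \<in> S} \<subseteq> {0..k}" using inW by fastforce
    moreover have "{a. Inl a \<in> S} \<noteq> {0..k}" using R by auto
    ultimately show ?thesis unfolding simplex_boundary_def by blast
  qed
  moreover have "{b. Inr b \<in> S} \<in> iterated_S0_join m"
  proof -
    have "{b. Inr b \<in> S} \<subseteq> {..<m} \<times> UNIV" using inW by fastforce
    moreover have "\<not> (Inr (i, True) \<in> S \<and> Inr (i, False) \<in> S)" for i
      using R inW[of "Inr (i, True)"] by (cases "i < m") auto
    ultimately show ?thesis unfolding iterated_S0_join_def by blast
  qed
  ultimately show ?L unfolding bipyramid_def join_def by blast
qed

lemma Union_bipyramid_simplex_boundary: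
  assumes "1 \<le> k"
  shows "\<Union>(bipyramid (simplex_boundary k) m) = bipyramid_vertices k m"
proof
  show "\<Union>(bipyramid (simplex_boundary k) m) \<subseteq> bipyramid_vertices k m"
    by (auto simp: mem_bipyramid_simplex_boundary)
  have "{v} \<in> bipyramid (simplex_boundary k) m" if "v \<in> bipyramid_vertices k m" for v
  proof -
    have "Inl 0 \<in> Inl ` {..k}" "Inl 1 \<in> Inl ` {..k}" using assms by auto
    then have "\<not> Inl ` {..k} \<subseteq> {v}" by (metis Inl_inject singletonD subsetD zero_neq_one)
    then show ?thesis using that by (auto simp: mem_bipyramid_simplex_boundary)
  qed
  then show "bipyramid_vertices k m \<subseteq> \<Union>(bipyramid (simplex_boundary k) m)" by blast
qed

lemma simp_iso_bipyramid_simplex_boundary: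
  assumes k: "1 \<le> k" and F: "bij_betw F (bipyramid_vertices k m) V"
  shows "simp_iso (bipyramid (simplex_boundary k) m)
           {\<sigma>. \<sigma> \<subseteq> V \<and> \<not> F ` Inl ` {..k} \<subseteq> \<sigma> \<and>
                (\<forall>i<m. \<not> (F (Inr (i, True)) \<in> \<sigma> \<and> F (Inr (i, False)) \<in> \<sigma>))}"
    (is "simp_iso ?B ?K")
proof -
  let ?W = "bipyramid_vertices k m"
  have inj: "inj_on F ?W" and img: "F ` ?W = V" using F by (auto simp: bij_betw_def)
  have mem: "F w \<in> F ` S \<longleftrightarrow> w \<in> S" if "S \<subseteq> ?W" "w \<in> ?W" for S w
    using inj_on_image_mem_iff[OF inj that(2,1)] .
  have "(\<lambda>\<sigma>. F ` \<sigma>) ` ?B = ?K"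
  proof (intro equalityI subsetI)
    fix \<sigma> assume "\<sigma> \<in> (\<lambda>\<sigma>. F ` \<sigma>) ` ?B"
    then obtain S where S: "S \<in> ?B" "\<sigma> = F ` S" by blast
    then have "S \<subseteq> ?W" by (simp add: mem_bipyramid_simplex_boundary)
    with S mem img show "\<sigma> \<in> ?K" by (auto simp: mem_bipyramid_simplex_boundary image_subset_iff)
  next
    fix \<sigma> assume \<sigma>: "\<sigma> \<in> ?K"
    let ?S = "{w \<in> ?W. F w \<in> \<sigma>}"
    have "\<sigma> = F ` ?S" using \<sigma> img by auto
    moreover have "?S \<in> ?B" using \<sigma> by (auto simp: mem_bipyramid_simplex_boundary image_subset_iff)
    ultimately show "\<sigma> \<in> (\<lambda>\<sigma>. F ` \<sigma>) ` ?B" by blast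
  qed
  then show ?thesis unfolding simp_iso_def Union_bipyramid_simplex_boundary[OF k] using inj by blast
qed

definition bipyramid_point :: "nat \<Rightarrow> nat \<Rightarrow> (nat + nat \<times> bool \<Rightarrow> real) \<Rightarrow> bool" where
  "bipyramid_point k m f \<longleftrightarrow> (\<forall>v. 0 \<le> f v) \<and> (\<forall>v. v \<notin> bipyramid_vertices k m \<longrightarrow> f v = 0)
     \<and> (\<exists>j\<le>k. f (Inl j) = 0) \<and> (\<forall>i. f (Inr (i, True)) = 0 \<or> f (Inr (i, False)) = 0)
     \<and> sum f (bipyramid_vertices k m) = 1"

lemma realization_carrier_bipyramid:
  "f \<in> realization_carrier (bipyramid (simplex_boundary k) m) \<longleftrightarrow> bipyramid_point k m f"
proof -
  let ?S = "{v. f v \<noteq> 0}" and ?W = "bipyramid_vertices k m"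
  have "?S \<in> bipyramid (simplex_boundary k) m \<longleftrightarrow>
      ?S \<subseteq> ?W \<and> (\<exists>j\<le>k. f (Inl j) = 0) \<and> (\<forall>i. f (Inr (i, True)) = 0 \<or> f (Inr (i, False)) = 0)"
  proof (cases "?S \<subseteq> ?W")
    case True
    then have "f (Inr (i, b)) = 0" if "\<not> i < m" for i b
      using that by (auto simp: subset_iff)
    then have "(\<forall>i<m. \<not> (Inr (i, True) \<in> ?S \<and> Inr (i, False) \<in> ?S)) \<longleftrightarrow>
        (\<forall>i. f (Inr (i, True)) = 0 \<or> f (Inr (i, False)) = 0)"
      by auto
    moreover have "\<not> Inl ` {..k} \<subseteq> ?S \<longleftrightarrow> (\<exists>j\<le>k. f (Inl j) = 0)" by auto
    ultimately show ?thesis using True unfolding mem_bipyramid_simplex_boundary by blast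
  qed (simp add: mem_bipyramid_simplex_boundary)
  then have mem: "?S \<in> bipyramid (simplex_boundary k) m \<longleftrightarrow>
      (\<forall>v. v \<notin> ?W \<longrightarrow> f v = 0) \<and> (\<exists>j\<le>k. f (Inl j) = 0) \<and>
      (\<forall>i. f (Inr (i, True)) = 0 \<or> f (Inr (i, False)) = 0)"
    by blast
  have sum_eq: "sum f ?S = sum f ?W" if "\<forall>v. v \<notin> ?W \<longrightarrow> f v = 0"
    by (rule sum.mono_neutral_left) (use that in auto)
  have fin: "finite ?S" if "\<forall>v. v \<notin> ?W \<longrightarrow> f v = 0"
    by (rule finite_subset[OF _ finite_bipyramid_vertices]) (use that in blast)
  show ?thesis
    unfolding realization_carrier_def bipyramid_point_def mem_Collect_eq mem
    using sum_eq fin by (intro iffI; elim conjE; intro conjI) simp_all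
qed

section \<open>The realization of a bipyramid is a sphere\<close>

fun max_upto :: "(nat \<Rightarrow> real) \<Rightarrow> nat \<Rightarrow> real" where
  "max_upto g 0 = g 0"
| "max_upto g (Suc k) = max (max_upto g k) (g (Suc k))"

lemma max_upto_ge: "j \<le> k \<Longrightarrow> g j \<le> max_upto g k"
  by (induction k) (auto simp: le_Suc_eq max.coboundedI1)

lemma max_upto_attained: "\<exists>j\<le>k. max_upto g k = g j"
proof (induction k)
  case 0 then show ?case by auto
next
  case (Suc k)
  then obtain j where "j \<le> k" "max_upto g k = g j" by auto
  then show ?case by (cases "max_upto g k \<le> g (Suc k)") (auto simp: max_def intro: le_SucI)
qed

lemma max_upto_cong: "(\<And>j. j \<le> k \<Longrightarrow> g j = g' j) \<Longrightarrow> max_upto g k = max_upto g' k"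
  by (induction k) auto

lemma max_upto_divide: "(c::real) > 0 \<Longrightarrow> max_upto (\<lambda>j. g j / c) k = max_upto g k / c"
  by (induction k) (auto simp: max_def divide_le_cancel)

lemma continuous_map_max_upto:
  assumes "\<And>j. continuous_map X euclideanreal (\<lambda>x. g x j)"
  shows "continuous_map X euclideanreal (\<lambda>x. max_upto (g x) k)"
  by (induction k) (auto intro!: continuous_map_real_max assms)

lemma max_upto_zero: "max_upto (\<lambda>j. 0) k = 0"
  by (induction k) auto

text \<open>A point \<open>f\<close> of the realization of the bipyramid is sent to \<open>x \<in> R^(k+m)\<close>: the first \<open>k\<close>
  coordinates are \<open>f j - mass/(k+1)\<close> for \<open>1 \<le> j \<le> k\<close> (the coordinate \<open>j = 0\<close> is recovered
  as minus their sum by \<open>hyperplane_point\<close>), the last \<open>m\<close> are the differences \<open>f(i,+) - f(i,-)\<close>.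
  This is a bijection onto the unit sphere of the positively homogeneous, positive definite
  function \<open>bipyramid_gauge\<close>, inverted by \<open>sphere_to_bipyramid\<close>; radial projection then
  identifies that sphere with the Euclidean one.\<close>

definition simplex_mass :: "nat \<Rightarrow> (nat + nat \<times> bool \<Rightarrow> real) \<Rightarrow> real" where
  "simplex_mass k f = (\<Sum>j\<le>k. f (Inl j))"

definition bipyramid_coords :: "nat \<Rightarrow> nat \<Rightarrow> (nat + nat \<times> bool \<Rightarrow> real) \<Rightarrow> nat \<Rightarrow> real" where
  "bipyramid_coords k m f c =
     (if c < k then f (Inl (Suc c)) - simplex_mass k f / (k + 1)
      else if c < k + m then f (Inr (c - k, True)) - f (Inr (c - k, False)) else 0)"

definition bipyramid_to_sphere :: "nat \<Rightarrow> nat \<Rightarrow> (nat + nat \<times> bool \<Rightarrow> real) \<Rightarrow> nat \<Rightarrow> real" where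
  "bipyramid_to_sphere k m f =
     (\<lambda>c. bipyramid_coords k m f c / L2_set (bipyramid_coords k m f) {..<k + m})"

definition hyperplane_point :: "nat \<Rightarrow> (nat \<Rightarrow> real) \<Rightarrow> nat \<Rightarrow> real" where
  "hyperplane_point k x j = (if j = 0 then - (\<Sum>c<k. x c) else x (j - 1))"

definition orthant_shift :: "nat \<Rightarrow> (nat \<Rightarrow> real) \<Rightarrow> real" where
  "orthant_shift k x = max_upto (\<lambda>j. - hyperplane_point k x j) k"

definition bipyramid_gauge :: "nat \<Rightarrow> nat \<Rightarrow> (nat \<Rightarrow> real) \<Rightarrow> real" where
  "bipyramid_gauge k m x = real (k+1) * orthant_shift k x + (\<Sum>i<m. \<bar>x (k+i)\<bar>)"

definition sphere_weights :: "nat \<Rightarrow> nat \<Rightarrow> (nat \<Rightarrow> real) \<Rightarrow> nat + nat \<times> bool \<Rightarrow> real" where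
  "sphere_weights k m x v =
     (case v of
        Inl j \<Rightarrow> if j \<le> k then hyperplane_point k x j + orthant_shift k x else 0
      | Inr (i, b) \<Rightarrow> if i < m then (if b then max (x (k + i)) 0 else max (- x (k + i)) 0) else 0)"

definition sphere_to_bipyramid :: "nat \<Rightarrow> nat \<Rightarrow> (nat \<Rightarrow> real) \<Rightarrow> nat + nat \<times> bool \<Rightarrow> real" where
  "sphere_to_bipyramid k m x = (\<lambda>v. sphere_weights k m x v / bipyramid_gauge k m x)"

lemma sum_hyperplane_point: "(\<Sum>j\<le>k. hyperplane_point k x j) = 0"
proof -
  have "(\<Sum>j\<le>k. hyperplane_point k x j)
      = hyperplane_point k x 0 + (\<Sum>j<k. hyperplane_point k x (Suc j))"
    by (simp add: sum.atMost_shift)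
  also have "(\<Sum>j<k. hyperplane_point k x (Suc j)) = (\<Sum>c<k. x c)" by (simp add: hyperplane_point_def)
  finally show ?thesis by (simp add: hyperplane_point_def)
qed

lemma orthant_shift_ge: "j \<le> k \<Longrightarrow> - hyperplane_point k x j \<le> orthant_shift k x"
  unfolding orthant_shift_def using max_upto_ge[of j k "\<lambda>j. - hyperplane_point k x j"] by simp

lemma orthant_shift_nonneg: "0 \<le> orthant_shift k x"
proof -
  have "(\<Sum>j\<le>k. - hyperplane_point k x j) \<le> (\<Sum>j\<le>k. orthant_shift k x)"
    by (rule sum_mono) (simp add: orthant_shift_ge)
  then show ?thesis using sum_hyperplane_point[of k x] by (auto simp: sum_negf zero_le_mult_iff)
qed

lemma orthant_shift_eq_0_imp:
  assumes "orthant_shift k x = 0" "c < k" shows "x c = 0"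
proof -
  have "\<And>j. j \<le> k \<Longrightarrow> 0 \<le> hyperplane_point k x j"
    using orthant_shift_ge[of _ k x] assms(1) by force
  then have "\<forall>j\<in>{..k}. hyperplane_point k x j = 0"
    using sum_nonneg_eq_0_iff[of "{..k}" "hyperplane_point k x"] sum_hyperplane_point[of k x] by auto
  then have "hyperplane_point k x (Suc c) = 0" using assms(2) by auto
  then show ?thesis by (simp add: hyperplane_point_def)
qed

lemma bipyramid_gauge_pos:
  assumes "\<exists>c<k+m. x c \<noteq> 0" shows "0 < bipyramid_gauge k m x"
proof (rule ccontr)
  assume "\<not> 0 < bipyramid_gauge k m x"
  moreover have "0 \<le> real (k+1) * orthant_shift k x" using orthant_shift_nonneg by simp
  moreover have "0 \<le> (\<Sum>i<m. \<bar>x (k+i)\<bar>)" by (simp add: sum_nonneg)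
  ultimately have "real (k+1) * orthant_shift k x = 0" and b: "(\<Sum>i<m. \<bar>x (k+i)\<bar>) = 0"
    unfolding bipyramid_gauge_def by linarith+
  then have a: "orthant_shift k x = 0" by simp
  from b have b': "\<And>i. i < m \<Longrightarrow> x (k+i) = 0" by (simp add: sum_nonneg_eq_0_iff)
  from assms obtain c where "c < k+m" "x c \<noteq> 0" by auto
  show False
  proof (cases "c < k")
    case True then show False using orthant_shift_eq_0_imp[OF a] \<open>x c \<noteq> 0\<close> by auto
  next
    case False
    have "x (k + (c - k)) = 0" by (rule b') (use False \<open>c < k+m\<close> in linarith)
    then show False using False \<open>x c \<noteq> 0\<close> by simp
  qed
qed

lemma hyperplane_point_bipyramid_coords:
  assumes "j \<le> k"
  shows "hyperplane_point k (bipyramid_coords k m f) j = f (Inl j) - simplex_mass k f / (k+1)"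
proof (cases j)
  case 0
  have s: "simplex_mass k f = f (Inl 0) + (\<Sum>c<k. f (Inl (Suc c)))"
    unfolding simplex_mass_def by (simp add: sum.atMost_shift)
  have "hyperplane_point k (bipyramid_coords k m f) 0
      = - (\<Sum>c<k. f (Inl (Suc c)) - simplex_mass k f / (k+1))"
    by (simp add: hyperplane_point_def bipyramid_coords_def)
  also have "\<dots> = - (\<Sum>c<k. f (Inl (Suc c))) + k * (simplex_mass k f / (k+1))"
    by (simp add: sum_subtractf)
  also have "\<dots> = f (Inl 0) - simplex_mass k f / (k+1)"
    using s by (simp add: field_simps)
  finally show ?thesis using 0 by simp
next
  case (Suc c)
  then show ?thesis using assms by (simp add: hyperplane_point_def bipyramid_coords_def)
qed

lemma orthant_shift_bipyramid_coords:
  assumes "bipyramid_point k m f"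
  shows "orthant_shift k (bipyramid_coords k m f) = simplex_mass k f / (k+1)"
proof -
  let ?t = "simplex_mass k f / (k+1)"
  have "orthant_shift k (bipyramid_coords k m f) = max_upto (\<lambda>j. ?t - f (Inl j)) k"
    unfolding orthant_shift_def
    by (rule max_upto_cong) (simp add: hyperplane_point_bipyramid_coords)
  moreover obtain j where "j \<le> k" "max_upto (\<lambda>j. ?t - f (Inl j)) k = ?t - f (Inl j)"
    using max_upto_attained by blast
  moreover obtain j' where "j' \<le> k" "f (Inl j') = 0"
    using assms unfolding bipyramid_point_def by auto
  moreover have "?t - f (Inl j') \<le> max_upto (\<lambda>j. ?t - f (Inl j)) k"
    using max_upto_ge[OF \<open>j' \<le> k\<close>, of "\<lambda>j. ?t - f (Inl j)"] by simp
  moreover have "0 \<le> f (Inl j)" using assms unfolding bipyramid_point_def by auto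
  ultimately show ?thesis by linarith
qed

lemma bipyramid_coords_Inr:
  "i < m \<Longrightarrow> bipyramid_coords k m f (k + i) = f (Inr (i, True)) - f (Inr (i, False))"
  by (simp add: bipyramid_coords_def)

lemma bipyramid_gauge_bipyramid_coords:
  assumes "bipyramid_point k m f"
  shows "bipyramid_gauge k m (bipyramid_coords k m f) = 1"
proof -
  have p: "\<And>i. \<bar>f (Inr (i,True)) - f (Inr (i,False))\<bar> = f (Inr (i,True)) + f (Inr (i,False))"
  proof -
    fix i
    have "f (Inr (i,True)) = 0 \<or> f (Inr (i,False)) = 0" "0 \<le> f (Inr (i,True))" "0 \<le> f (Inr (i,False))"
      using assms unfolding bipyramid_point_def by auto
    then show "\<bar>f (Inr (i,True)) - f (Inr (i,False))\<bar> = f (Inr (i,True)) + f (Inr (i,False))" by auto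
  qed
  have "bipyramid_gauge k m (bipyramid_coords k m f)
      = simplex_mass k f + (\<Sum>i<m. f (Inr (i, True)) + f (Inr (i, False)))"
    unfolding bipyramid_gauge_def orthant_shift_bipyramid_coords[OF assms]
    using p by (simp add: bipyramid_coords_Inr)
  also have "\<dots> = sum f (bipyramid_vertices k m)"
    by (simp add: sum_bipyramid_vertices simplex_mass_def)
  also have "\<dots> = 1" using assms unfolding bipyramid_point_def by auto
  finally show ?thesis .
qed

lemma sphere_to_bipyramid_bipyramid_coords:
  assumes "bipyramid_point k m f"
  shows "sphere_to_bipyramid k m (bipyramid_coords k m f) = f"
proof
  fix v
  have g: "\<forall>v. 0 \<le> f v" "\<forall>v. v \<notin> bipyramid_vertices k m \<longrightarrow> f v = 0"
     "\<forall>i. f (Inr (i,True)) = 0 \<or> f (Inr (i,False)) = 0"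
    using assms unfolding bipyramid_point_def by auto
  show "sphere_to_bipyramid k m (bipyramid_coords k m f) v = f v"
  proof (cases v)
    case (Inl j)
    then show ?thesis using g(2)[rule_format, of v]
      by (auto simp: sphere_to_bipyramid_def bipyramid_gauge_bipyramid_coords[OF assms] sphere_weights_def
          orthant_shift_bipyramid_coords[OF assms] hyperplane_point_bipyramid_coords)
  next
    case (Inr p)
    then obtain i b where p: "v = Inr (i,b)" by (cases p) auto
    show ?thesis
    proof (cases "i < m")
      case True
      then show ?thesis
        using g(1)[rule_format, of "Inr (i, True)"] g(1)[rule_format, of "Inr (i, False)"]
          g(3)[rule_format, of i]
        by (cases b) (auto simp: p sphere_to_bipyramid_def bipyramid_gauge_bipyramid_coords[OF assms]
            sphere_weights_def bipyramid_coords_Inr max_def)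
    next
      case False
      then show ?thesis using g(2)[rule_format, of v]
        by (auto simp: p sphere_to_bipyramid_def bipyramid_gauge_bipyramid_coords[OF assms]
            sphere_weights_def)
    qed
  qed
qed

lemma hyperplane_point_divide: "hyperplane_point k (\<lambda>c. x c / r) j = hyperplane_point k x j / r"
  by (simp add: hyperplane_point_def sum_divide_distrib)

lemma orthant_shift_divide: "r > 0 \<Longrightarrow> orthant_shift k (\<lambda>c. x c / r) = orthant_shift k x / r"
  unfolding orthant_shift_def hyperplane_point_divide
  using max_upto_divide[of r "\<lambda>j. - hyperplane_point k x j" k] by simp

lemma bipyramid_gauge_divide:
  "r > 0 \<Longrightarrow> bipyramid_gauge k m (\<lambda>c. x c / r) = bipyramid_gauge k m x / r"
  unfolding bipyramid_gauge_def orthant_shift_divide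
  by (simp add: abs_divide sum_divide_distrib add_divide_distrib)

lemma sphere_to_bipyramid_divide:
  assumes "r > 0" shows "sphere_to_bipyramid k m (\<lambda>c. x c / r) = sphere_to_bipyramid k m x"
proof
  fix v
  have "sphere_weights k m (\<lambda>c. x c / r) v = sphere_weights k m x v / r"
    using assms by (cases v) (auto simp: sphere_weights_def hyperplane_point_divide
        orthant_shift_divide add_divide_distrib max_divide_distrib_right)
  then show "sphere_to_bipyramid k m (\<lambda>c. x c / r) v = sphere_to_bipyramid k m x v"
    using assms unfolding sphere_to_bipyramid_def bipyramid_gauge_divide[OF assms]
    by (cases "bipyramid_gauge k m x = 0") auto
qed

lemma bipyramid_gauge_eq_0:
  assumes z: "\<And>c. c < k + m \<Longrightarrow> x c = 0"
  shows "bipyramid_gauge k m x = 0"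
proof -
  have "orthant_shift k x = max_upto (\<lambda>j. 0) k" unfolding orthant_shift_def
    by (rule max_upto_cong) (auto simp: hyperplane_point_def z)
  then show ?thesis unfolding bipyramid_gauge_def max_upto_zero by (simp add: z)
qed

definition sphere_carrier :: "nat \<Rightarrow> (nat \<Rightarrow> real) set" where
  "sphere_carrier d = {x. (\<Sum>i\<le>d. x i ^ 2) = 1 \<and> (\<forall>i>d. x i = 0)}"

lemma nsphere_eq_subtopology: "nsphere d = subtopology (powertop_real UNIV) (sphere_carrier d)"
  unfolding nsphere sphere_carrier_def ..

lemma atMost_pred_add_eq_lessThan: "1 \<le> (k::nat) \<Longrightarrow> {..k - 1 + m} = {..<k + m}"
  using lessThan_Suc_atMost[of "k - 1 + m"] by simp

lemma L2_set_bipyramid_coords_pos: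
  assumes "bipyramid_point k m f" shows "0 < L2_set (bipyramid_coords k m f) {..<k+m}"
proof (rule ccontr)
  assume "\<not> 0 < L2_set (bipyramid_coords k m f) {..<k+m}"
  then have "(\<Sum>c<k+m. (bipyramid_coords k m f c)^2) = 0"
    unfolding L2_set_def using sum_nonneg[of "{..<k+m}" "\<lambda>c. (bipyramid_coords k m f c)^2"] by simp
  then have "\<forall>c\<in>{..<k+m}. (bipyramid_coords k m f c)^2 = 0"
    by (subst (asm) sum_nonneg_eq_0_iff) auto
  then have "bipyramid_gauge k m (bipyramid_coords k m f) = 0" by (intro bipyramid_gauge_eq_0) auto
  then show False using bipyramid_gauge_bipyramid_coords[OF assms] by simp
qed

lemma bipyramid_to_sphere_in:
  assumes "bipyramid_point k m f" "1 \<le> k"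
  shows "bipyramid_to_sphere k m f \<in> sphere_carrier (k - 1 + m)"
proof -
  let ?S = "\<Sum>c<k+m. (bipyramid_coords k m f c)^2"
  have "0 < ?S" using L2_set_bipyramid_coords_pos[OF assms(1)] unfolding L2_set_def by simp
  then have S: "0 < ?S" .
  have "(\<Sum>i\<le>k - 1 + m. (bipyramid_to_sphere k m f i)^2)
      = (\<Sum>c<k+m. (bipyramid_coords k m f c)^2 / ?S)"
    unfolding atMost_pred_add_eq_lessThan[OF assms(2)] bipyramid_to_sphere_def L2_set_def using S
    by (intro sum.cong) (auto simp: power_divide)
  also have "\<dots> = 1" using S by (simp add: sum_divide_distrib[symmetric])
  finally have "(\<Sum>i\<le>k - 1 + m. (bipyramid_to_sphere k m f i)^2) = 1" .
  moreover have "\<forall>i>k - 1 + m. bipyramid_to_sphere k m f i = 0"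
    using assms(2) by (auto simp: bipyramid_to_sphere_def bipyramid_coords_def)
  ultimately show ?thesis unfolding sphere_carrier_def by auto
qed

lemma sphere_carrier_nonzero:
  assumes "x \<in> sphere_carrier (k - 1 + m)" "1 \<le> k"
  shows "\<exists>c<k + m. x c \<noteq> 0"
proof (rule ccontr)
  assume "\<not> (\<exists>c<k+m. x c \<noteq> 0)"
  then have "(\<Sum>i\<le>k - 1 + m. (x i)^2) = 0" unfolding atMost_pred_add_eq_lessThan[OF assms(2)] by simp
  then show False using assms(1) unfolding sphere_carrier_def by simp
qed

lemma bipyramid_point_sphere_to_bipyramid:
  assumes "x \<in> sphere_carrier (k - 1 + m)" "1 \<le> k"
  shows "bipyramid_point k m (sphere_to_bipyramid k m x)"
proof -
  have h: "0 < bipyramid_gauge k m x" by (rule bipyramid_gauge_pos[OF sphere_carrier_nonzero[OF assms]])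
  have nn: "\<forall>v. 0 \<le> sphere_to_bipyramid k m x v"
  proof
    fix v show "0 \<le> sphere_to_bipyramid k m x v"
    proof (cases v)
      case (Inl j)
      then show ?thesis
        using h orthant_shift_ge[of j k x] by (auto simp: sphere_to_bipyramid_def sphere_weights_def)
    next
      case (Inr p)
      then show ?thesis using h by (cases p) (auto simp: sphere_to_bipyramid_def sphere_weights_def)
    qed
  qed
  have out: "\<forall>v. v \<notin> bipyramid_vertices k m \<longrightarrow> sphere_to_bipyramid k m x v = 0"
    by (auto simp: sphere_to_bipyramid_def sphere_weights_def split: sum.splits)
  obtain j where "j \<le> k" "orthant_shift k x = - hyperplane_point k x j"
    unfolding orthant_shift_def using max_upto_attained by blast
  then have ex: "\<exists>j\<le>k. sphere_to_bipyramid k m x (Inl j) = 0"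
    by (auto simp: sphere_to_bipyramid_def sphere_weights_def)
  have pr: "\<forall>i. sphere_to_bipyramid k m x (Inr (i, True)) = 0
               \<or> sphere_to_bipyramid k m x (Inr (i, False)) = 0"
    by (auto simp: sphere_to_bipyramid_def sphere_weights_def max_def)
  have ab: "\<And>a::real. max a 0 + max (-a) 0 = \<bar>a\<bar>" by (auto simp: max_def)
  have "sum (sphere_weights k m x) (bipyramid_vertices k m)
      = (\<Sum>j\<le>k. hyperplane_point k x j + orthant_shift k x) + (\<Sum>i<m. \<bar>x (k+i)\<bar>)"
    unfolding sum_bipyramid_vertices by (simp add: sphere_weights_def ab)
  also have "\<dots> = bipyramid_gauge k m x"
    unfolding bipyramid_gauge_def by (simp add: sum.distrib sum_hyperplane_point)
  finally have "sum (sphere_to_bipyramid k m x) (bipyramid_vertices k m) = 1"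
    using h unfolding sphere_to_bipyramid_def by (simp add: sum_divide_distrib[symmetric])
  then show ?thesis unfolding bipyramid_point_def using nn out ex pr by blast
qed

lemma bipyramid_to_sphere_sphere_to_bipyramid:
  assumes "x \<in> sphere_carrier (k - 1 + m)" "1 \<le> k"
  shows "bipyramid_to_sphere k m (sphere_to_bipyramid k m x) = x"
proof -
  have h: "0 < bipyramid_gauge k m x" by (rule bipyramid_gauge_pos[OF sphere_carrier_nonzero[OF assms]])
  have "simplex_mass k (sphere_to_bipyramid k m x) = (k+1) * orthant_shift k x / bipyramid_gauge k m x"
    unfolding simplex_mass_def sphere_to_bipyramid_def
    by (simp add: sphere_weights_def sum_divide_distrib[symmetric] sum.distrib sum_hyperplane_point)
  then have sc': "simplex_mass k (sphere_to_bipyramid k m x) / (k+1)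
      = orthant_shift k x / bipyramid_gauge k m x"
    by simp
  have z: "\<And>c. k + m \<le> c \<Longrightarrow> x c = 0" using assms unfolding sphere_carrier_def by auto
  have r: "bipyramid_coords k m (sphere_to_bipyramid k m x) = (\<lambda>c. x c / bipyramid_gauge k m x)"
  proof
    fix c
    show "bipyramid_coords k m (sphere_to_bipyramid k m x) c = x c / bipyramid_gauge k m x"
    proof (cases "c < k")
      case True
      then show ?thesis unfolding bipyramid_coords_def sc' using h
        by (simp add: sphere_to_bipyramid_def sphere_weights_def hyperplane_point_def
            diff_divide_distrib[symmetric])
    next
      case False
      show ?thesis
      proof (cases "c < k + m")
        case True
        then have "x (k + (c - k)) = x c" using False by simp
        then show ?thesis unfolding bipyramid_coords_def using True False
          by (auto simp: sphere_to_bipyramid_def sphere_weights_def max_def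
              diff_divide_distrib[symmetric])
      next
        case False
        then show ?thesis using False z[of c] by (simp add: bipyramid_coords_def)
      qed
    qed
  qed
  have "(\<Sum>c<k+m. (x c / bipyramid_gauge k m x)^2) = (\<Sum>c<k+m. (x c)^2) / (bipyramid_gauge k m x)^2"
    by (simp add: power_divide sum_divide_distrib)
  also have "(\<Sum>c<k+m. (x c)^2) = 1"
    using assms unfolding sphere_carrier_def atMost_pred_add_eq_lessThan[OF assms(2)] by simp
  finally have "L2_set (bipyramid_coords k m (sphere_to_bipyramid k m x)) {..<k+m}
      = 1 / bipyramid_gauge k m x"
    unfolding L2_set_def r using h by (simp add: real_sqrt_divide)
  then show ?thesis unfolding bipyramid_to_sphere_def r using h by auto
qed

lemma continuous_map_bipyramid_coords:
  "continuous_map (subtopology (powertop_real UNIV) S) euclideanreal (\<lambda>f. bipyramid_coords k m f c)"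
proof -
  consider "c < k" | "\<not> c < k" "c < k + m" | "\<not> c < k + m" by linarith
  then show ?thesis
    by cases (simp_all add: bipyramid_coords_def simplex_mass_def;
        intro continuous_intros continuous_map_coordinate)+
qed

lemma continuous_map_L2_set_bipyramid_coords:
  "continuous_map (subtopology (powertop_real UNIV) S) euclideanreal
     (\<lambda>f. L2_set (bipyramid_coords k m f) {..<d})"
  unfolding L2_set_def by (intro continuous_intros continuous_map_bipyramid_coords) auto

lemma continuous_map_hyperplane_point:
  "continuous_map (subtopology (powertop_real UNIV) S) euclideanreal (\<lambda>x. hyperplane_point k x j)"
  by (cases "j = 0")
    (simp_all add: hyperplane_point_def; intro continuous_intros continuous_map_coordinate)+

lemma continuous_map_orthant_shift:
  "continuous_map (subtopology (powertop_real UNIV) S) euclideanreal (\<lambda>x. orthant_shift k x)"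
  unfolding orthant_shift_def
  by (rule continuous_map_max_upto) (intro continuous_intros continuous_map_hyperplane_point)

lemma continuous_map_bipyramid_gauge:
  "continuous_map (subtopology (powertop_real UNIV) S) euclideanreal (\<lambda>x. bipyramid_gauge k m x)"
  unfolding bipyramid_gauge_def
  by (intro continuous_intros continuous_map_orthant_shift continuous_map_coordinate) auto

lemma continuous_map_sphere_weights:
  "continuous_map (subtopology (powertop_real UNIV) S) euclideanreal (\<lambda>x. sphere_weights k m x v)"
proof (cases v)
  case (Inl j)
  then show ?thesis
    by (cases "j \<le> k") (simp_all add: sphere_weights_def;
        intro continuous_intros continuous_map_hyperplane_point continuous_map_orthant_shift)+
next
  case (Inr p)
  then obtain i b where "v = Inr (i, b)" by (cases p) auto
  then show ?thesis
    by (cases "i < m"; cases b) (simp_all add: sphere_weights_def;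
        intro continuous_intros continuous_map_coordinate)+
qed

lemma sphere_to_bipyramid_bipyramid_to_sphere:
  assumes "bipyramid_point k m f"
  shows "sphere_to_bipyramid k m (bipyramid_to_sphere k m f) = f"
  using sphere_to_bipyramid_divide[OF L2_set_bipyramid_coords_pos[OF assms]]
    sphere_to_bipyramid_bipyramid_coords[OF assms]
  by (simp add: bipyramid_to_sphere_def)

lemma realization_bipyramid_homeomorphic_nsphere:
  assumes "1 \<le> k"
  shows "realization (bipyramid (simplex_boundary k) m) homeomorphic_space nsphere (k - 1 + m)"
  unfolding homeomorphic_space_def homeomorphic_maps_def
proof (intro exI conjI ballI)
  let ?X = "realization (bipyramid (simplex_boundary k) m)" and ?Y = "nsphere (k - 1 + m)"
  show "continuous_map ?X ?Y (bipyramid_to_sphere k m)"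
    unfolding nsphere_eq_subtopology continuous_map_in_subtopology continuous_map_componentwise_UNIV
  proof (intro conjI allI)
    show "continuous_map ?X euclideanreal (\<lambda>f. bipyramid_to_sphere k m f c)" for c
      unfolding realization_eq_subtopology bipyramid_to_sphere_def
      by (intro continuous_map_real_divide continuous_map_bipyramid_coords
          continuous_map_L2_set_bipyramid_coords)
         (use L2_set_bipyramid_coords_pos realization_carrier_bipyramid in force)
    show "bipyramid_to_sphere k m \<in> topspace ?X \<rightarrow> sphere_carrier (k - 1 + m)"
      using bipyramid_to_sphere_in assms
      by (auto simp: topspace_realization realization_carrier_bipyramid)
  qed
  show "continuous_map ?Y ?X (sphere_to_bipyramid k m)"
  proof (rule continuous_map_into_realization)
    show "continuous_map ?Y euclideanreal (\<lambda>x. sphere_to_bipyramid k m x v)" for v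
      unfolding nsphere_eq_subtopology sphere_to_bipyramid_def
      by (intro continuous_map_real_divide continuous_map_sphere_weights continuous_map_bipyramid_gauge)
         (use bipyramid_gauge_pos sphere_carrier_nonzero assms in force)
    show "sphere_to_bipyramid k m
        \<in> topspace ?Y \<rightarrow> realization_carrier (bipyramid (simplex_boundary k) m)"
      using bipyramid_point_sphere_to_bipyramid assms
      by (auto simp: nsphere_eq_subtopology realization_carrier_bipyramid)
  qed
  show "sphere_to_bipyramid k m (bipyramid_to_sphere k m f) = f" if "f \<in> topspace ?X" for f
    using that sphere_to_bipyramid_bipyramid_to_sphere
    by (simp add: topspace_realization realization_carrier_bipyramid)
  show "bipyramid_to_sphere k m (sphere_to_bipyramid k m x) = x" if "x \<in> topspace ?Y" for x
    using that bipyramid_to_sphere_sphere_to_bipyramid assms by (simp add: nsphere_eq_subtopology)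
qed

section \<open>Counting rooted forests\<close>

text \<open>\<open>forest_maps A B\<close> encodes the forests on \<open>B\<close> whose roots are attached to vertices of \<open>A\<close>
  by their parent maps. Their number \<open>forest_count (card A) (card B)\<close> is the generalised
  Cayley formula \<open>a (a + b)^(b - 1)\<close>; it follows by induction after splitting off the set \<open>S\<close>
  of vertices attached directly to \<open>A\<close>.\<close>

definition forest_maps :: "'a set \<Rightarrow> 'a set \<Rightarrow> ('a \<Rightarrow> 'a) set" where
  "forest_maps A B = {p. (\<forall>y\<in>B. p y \<in> A \<union> B) \<and> (\<forall>y. y \<notin> B \<longrightarrow> p y = undefined)
                        \<and> (\<forall>y\<in>B. \<exists>j. (p ^^ j) y \<in> A)}"

definition forest_count :: "nat \<Rightarrow> nat \<Rightarrow> nat" where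
  "forest_count a b = (if b = 0 then 1 else a * (a + b) ^ (b - 1))"

definition forest_maps_rooted_at :: "'a set \<Rightarrow> 'a set \<Rightarrow> 'a set \<Rightarrow> ('a \<Rightarrow> 'a) set" where
  "forest_maps_rooted_at A B S = {p \<in> forest_maps A B. {y \<in> B. p y \<in> A} = S}"

lemma finite_forest_maps: "finite A \<Longrightarrow> finite B \<Longrightarrow> finite (forest_maps A B)"
  by (rule finite_subset[OF _ finite_set_of_finite_funs[of B "A \<union> B" undefined]])
     (auto simp: forest_maps_def)

lemma forest_maps_empty: "forest_maps A {} = {\<lambda>_. undefined}"
  by (auto simp: forest_maps_def)

lemma forest_maps_no_roots: "B \<noteq> {} \<Longrightarrow> forest_maps {} B = {}"
  by (auto simp: forest_maps_def)

lemma forest_map_no_fixpoint: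
  assumes "p \<in> forest_maps A B" "A \<inter> B = {}" "y \<in> B"
  shows "p y \<noteq> y"
proof
  assume "p y = y"
  then have "(p ^^ j) y = y" for j by (induction j) auto
  moreover obtain j where "(p ^^ j) y \<in> A" using assms unfolding forest_maps_def by auto
  ultimately show False using assms by auto
qed

lemma forest_map_height_less:
  assumes p: "p \<in> forest_maps A B" and AB: "A \<inter> B = {}" and y: "y \<in> B"
  shows "(LEAST j. (p ^^ j) (p y) \<in> A) < (LEAST j. (p ^^ j) y \<in> A)"
proof -
  obtain j where j: "(p ^^ j) y \<in> A" using p y unfolding forest_maps_def by auto
  let ?d = "LEAST j. (p ^^ j) y \<in> A"
  have d: "(p ^^ ?d) y \<in> A" using j by (rule LeastI)
  have "?d \<noteq> 0" using d y AB by (intro notI) auto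
  then obtain d' where d': "?d = Suc d'" by (cases ?d) auto
  have "(p ^^ d') (p y) \<in> A" using d unfolding d' by (simp add: funpow_Suc_right del: funpow.simps)
  then have "(LEAST j. (p ^^ j) (p y) \<in> A) \<le> d'" by (rule Least_le)
  then show ?thesis using d' by simp
qed

definition forest_map_split :: "'a set \<Rightarrow> 'a set \<Rightarrow> ('a \<Rightarrow> 'a) \<Rightarrow> ('a \<Rightarrow> 'a) \<times> ('a \<Rightarrow> 'a)" where
  "forest_map_split B S p = (restrict p S, \<lambda>y. if y \<in> B - S then p y else undefined)"

definition forest_map_join :: "'a set \<Rightarrow> ('a \<Rightarrow> 'a) \<times> ('a \<Rightarrow> 'a) \<Rightarrow> 'a \<Rightarrow> 'a" where
  "forest_map_join S qr y = (if y \<in> S then fst qr y else snd qr y)"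

lemma forest_map_split_mem:
  assumes p: "p \<in> forest_maps_rooted_at A B S" and AB: "A \<inter> B = {}"
  shows "forest_map_split B S p \<in> (\<Pi>\<^sub>E y\<in>S. A) \<times> forest_maps S (B - S)"
proof -
  have pF: "p \<in> forest_maps A B" and S: "S = {y \<in> B. p y \<in> A}"
    using p unfolding forest_maps_rooted_at_def by auto
  let ?r = "\<lambda>y. if y \<in> B - S then p y else undefined"
  have reach: "\<exists>i. (?r ^^ i) y \<in> S" if "y \<in> B - S" "(p ^^ j) y \<in> A" for j y
    using that
  proof (induction j arbitrary: y)
    case 0 then show ?case using AB by auto
  next
    case (Suc j)
    then have "p y \<in> B" "?r y = p y" using pF S unfolding forest_maps_def by auto
    moreover have "(p ^^ j) (p y) \<in> A"
      using Suc.prems(2) by (simp add: funpow_Suc_right del: funpow.simps)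
    ultimately show ?case
      using Suc.IH[of "p y"] by (cases "p y \<in> S") (auto intro: exI[of _ 1] exI[of _ "Suc _"]
          simp: funpow_Suc_right simp del: funpow.simps)
  qed
  have "?r \<in> forest_maps S (B - S)"
    unfolding forest_maps_def
  proof (intro CollectI conjI ballI allI impI)
    fix y assume y: "y \<in> B - S"
    then show "?r y \<in> S \<union> (B - S)" using pF S unfolding forest_maps_def by auto
    obtain j where "(p ^^ j) y \<in> A" using pF y unfolding forest_maps_def by auto
    then show "\<exists>i. (?r ^^ i) y \<in> S" using reach y by blast
  qed auto
  moreover have "restrict p S \<in> (\<Pi>\<^sub>E y\<in>S. A)" using S by auto
  ultimately show ?thesis by (simp add: forest_map_split_def)
qed

lemma forest_map_join_mem:
  assumes qr: "qr \<in> (\<Pi>\<^sub>E y\<in>S. A) \<times> forest_maps S (B - S)" and AB: "A \<inter> B = {}" and SB: "S \<subseteq> B"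
  shows "forest_map_join S qr \<in> forest_maps_rooted_at A B S"
proof -
  obtain q r where qr_eq: "qr = (q, r)" by (cases qr)
  let ?p = "forest_map_join S qr"
  have q: "q \<in> S \<rightarrow> A" and r: "r \<in> forest_maps S (B - S)" using qr qr_eq by auto
  have p_eq: "?p y = (if y \<in> S then q y else r y)" for y by (simp add: forest_map_join_def qr_eq)
  have reach: "\<exists>j. (?p ^^ j) z \<in> A" if "z \<in> B - S" "(r ^^ i) z \<in> S" for i z
    using that
  proof (induction i arbitrary: z)
    case 0 then show ?case by auto
  next
    case (Suc i)
    have pz: "?p z = r z" using Suc.prems(1) p_eq by auto
    have "r z \<in> S \<union> (B - S)" using r Suc.prems(1) unfolding forest_maps_def by auto
    show ?case
    proof (cases "r z \<in> S")
      case True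
      then have "(?p ^^ 2) z \<in> A" using pz p_eq q by (auto simp: numeral_2_eq_2)
      then show ?thesis by blast
    next
      case False
      with \<open>r z \<in> S \<union> (B - S)\<close> Suc.prems(2) obtain j where "(?p ^^ j) (r z) \<in> A"
        using Suc.IH[of "r z"] by (auto simp: funpow_Suc_right simp del: funpow.simps)
      then have "(?p ^^ Suc j) z \<in> A" using pz by (simp add: funpow_Suc_right del: funpow.simps)
      then show ?thesis by blast
    qed
  qed
  have "?p \<in> forest_maps A B"
    unfolding forest_maps_def
  proof (intro CollectI conjI ballI allI impI)
    show "?p y \<in> A \<union> B" if "y \<in> B" for y
      using that q r SB unfolding forest_maps_def p_eq by auto
    show "\<exists>j. (?p ^^ j) y \<in> A" if y: "y \<in> B" for y
    proof (cases "y \<in> S")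
      case True
      then have "(?p ^^ 1) y \<in> A" using p_eq q by auto
      then show ?thesis by blast
    next
      case False
      then obtain i where "(r ^^ i) y \<in> S" using r y unfolding forest_maps_def by blast
      then show ?thesis using reach False y by blast
    qed
    show "?p y = undefined" if "y \<notin> B" for y
      using that r SB unfolding forest_maps_def p_eq by auto
  qed
  moreover have "{y \<in> B. ?p y \<in> A} = S"
    using q r AB SB unfolding forest_maps_def p_eq by auto
  ultimately show ?thesis unfolding forest_maps_rooted_at_def by blast
qed

lemma bij_betw_forest_map_split:
  assumes "A \<inter> B = {}" "S \<subseteq> B"
  shows "bij_betw (forest_map_split B S) (forest_maps_rooted_at A B S)
           ((\<Pi>\<^sub>E y\<in>S. A) \<times> forest_maps S (B - S))"
proof (rule bij_betw_byWitness[where f' = "forest_map_join S"])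
  show "\<forall>p\<in>forest_maps_rooted_at A B S. forest_map_join S (forest_map_split B S p) = p"
    using assms(2)
    by (auto simp: fun_eq_iff forest_map_join_def forest_map_split_def forest_maps_rooted_at_def
        forest_maps_def)
  show "\<forall>qr\<in>(\<Pi>\<^sub>E y\<in>S. A) \<times> forest_maps S (B - S). forest_map_split B S (forest_map_join S qr) = qr"
    by (auto simp: fun_eq_iff forest_map_join_def forest_map_split_def forest_maps_def PiE_def
        extensional_def)
  show "forest_map_split B S ` forest_maps_rooted_at A B S \<subseteq> (\<Pi>\<^sub>E y\<in>S. A) \<times> forest_maps S (B - S)"
    using forest_map_split_mem[OF _ assms(1)] by blast
  show "forest_map_join S ` ((\<Pi>\<^sub>E y\<in>S. A) \<times> forest_maps S (B - S)) \<subseteq> forest_maps_rooted_at A B S"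
    using forest_map_join_mem[OF _ assms] by blast
qed

lemma card_forest_maps_rooted_at:
  assumes "A \<inter> B = {}" "S \<subseteq> B" "finite B"
  shows "card (forest_maps_rooted_at A B S) = card A ^ card S * card (forest_maps S (B - S))"
proof -
  have "finite S" using assms(2,3) finite_subset by blast
  then show ?thesis
    using bij_betw_same_card[OF bij_betw_forest_map_split[OF assms(1,2)]]
    by (simp add: card_cartesian_product card_PiE)
qed

lemma sum_Pow_card:
  assumes "finite B"
  shows "(\<Sum>S\<in>Pow B. g (card S)) = (\<Sum>s\<le>card B. (card B choose s) * (g s :: nat))"
proof -
  have "(\<Sum>S\<in>Pow B. g (card S)) = (\<Sum>s\<le>card B. \<Sum>S\<in>{S \<in> Pow B. card S = s}. g (card S))"
    by (rule sum.group[symmetric]) (use assms card_mono in auto)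
  also have "\<dots> = (\<Sum>s\<le>card B. (card B choose s) * g s)"
  proof (rule sum.cong[OF refl])
    fix s
    have "(\<Sum>S\<in>{S \<in> Pow B. card S = s}. g (card S)) = (\<Sum>S\<in>{S \<in> Pow B. card S = s}. g s)"
      by (rule sum.cong) auto
    then show "(\<Sum>S\<in>{S \<in> Pow B. card S = s}. g (card S)) = (card B choose s) * g s"
      using n_subsets[OF assms, of s] by simp
  qed
  finally show ?thesis .
qed

lemma card_forest_maps_eq_sum:
  assumes "A \<inter> B = {}" "finite A" "finite B"
  shows "card (forest_maps A B) = (\<Sum>S\<in>Pow B. card A ^ card S * card (forest_maps S (B - S)))"
proof -
  have "forest_maps A B = (\<Union>S\<in>Pow B. forest_maps_rooted_at A B S)"
  proof (intro equalityI subsetI)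
    fix p assume "p \<in> forest_maps A B"
    then have "p \<in> forest_maps_rooted_at A B {y \<in> B. p y \<in> A}"
      by (simp add: forest_maps_rooted_at_def)
    then show "p \<in> (\<Union>S\<in>Pow B. forest_maps_rooted_at A B S)" by (rule UN_I[rotated]) auto
  qed (simp add: forest_maps_rooted_at_def)
  also have "card \<dots> = (\<Sum>S\<in>Pow B. card (forest_maps_rooted_at A B S))"
  proof (rule card_UN_disjoint)
    show "finite (Pow B)" using assms(3) by simp
    show "\<forall>S\<in>Pow B. finite (forest_maps_rooted_at A B S)"
      using finite_forest_maps[OF assms(2,3)] unfolding forest_maps_rooted_at_def by simp
    show "\<forall>S\<in>Pow B. \<forall>S'\<in>Pow B. S \<noteq> S'
        \<longrightarrow> forest_maps_rooted_at A B S \<inter> forest_maps_rooted_at A B S' = {}"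
      unfolding forest_maps_rooted_at_def by blast
  qed
  also have "\<dots> = (\<Sum>S\<in>Pow B. card A ^ card S * card (forest_maps S (B - S)))"
    using card_forest_maps_rooted_at[OF assms(1) _ assms(3)] by (intro sum.cong) auto
  finally show ?thesis .
qed

lemma forest_count_recurrence:
  assumes "b \<ge> 1"
  shows "(\<Sum>s\<le>b. (b choose s) * (a ^ s * forest_count s (b - s))) = forest_count a b"
proof -
  obtain b' where b: "b = Suc b'" using assms by (cases b) auto
  have t: "(b choose Suc s) * (a^Suc s * forest_count (Suc s) (b - Suc s))
      = a * ((b' choose s) * a^s * b^(b'-s))" if "s \<le> b'" for s
  proof (cases "s = b'")
    case True then show ?thesis using b by (simp add: forest_count_def)
  next
    case False
    then have lt: "s < b'" using that by simp
    have f: "forest_count (Suc s) (b - Suc s) = Suc s * b^(b' - s - 1)"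
      using lt b by (simp add: forest_count_def)
    have c: "(b choose Suc s) * Suc s = b * (b' choose s)"
      using Suc_times_binomial[of s b'] b by (simp add: mult.commute)
    have p: "b * b^(b' - s - 1) = b^(b' - s)"
      using lt by (metis Suc_diff_Suc diff_Suc_1 power_Suc)
    have "(b choose Suc s) * (a^Suc s * forest_count (Suc s) (b - Suc s))
         = ((b choose Suc s) * Suc s) * a * a^s * b^(b' - s - 1)"
      unfolding f by (simp add: algebra_simps)
    also have "\<dots> = a * ((b' choose s) * a^s * (b * b^(b' - s - 1)))"
      unfolding c by (simp add: algebra_simps)
    finally show ?thesis unfolding p .
  qed
  have "(\<Sum>s\<le>b. (b choose s) * (a^s * forest_count s (b - s)))
      = (b choose 0) * (a^0 * forest_count 0 b)
        + (\<Sum>s\<le>b'. (b choose Suc s) * (a^Suc s * forest_count (Suc s) (b - Suc s)))"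
    unfolding b by (simp only: sum.atMost_Suc_shift diff_zero)
  also have "(b choose 0) * (a^0 * forest_count 0 b) = 0" using b by (simp add: forest_count_def)
  also have "(\<Sum>s\<le>b'. (b choose Suc s) * (a^Suc s * forest_count (Suc s) (b - Suc s)))
      = a * (\<Sum>s\<le>b'. (b' choose s) * a^s * b^(b'-s))"
    unfolding sum_distrib_left by (rule sum.cong[OF refl]) (rule t, simp)
  also have "(\<Sum>s\<le>b'. (b' choose s) * a^s * b^(b'-s)) = (a + b)^b'"
    by (subst binomial) simp
  also have "0 + a * (a + b)^b' = forest_count a b" using b by (simp only: forest_count_def) simp
  finally show ?thesis .
qed


theorem card_forest_maps:
  "finite A \<Longrightarrow> finite B \<Longrightarrow> A \<inter> B = {} \<Longrightarrow> card (forest_maps A B) = forest_count (card A) (card B)"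
proof (induction "card B" arbitrary: A B rule: less_induct)
  case less
  show ?case
  proof (cases "B = {}")
    case True then show ?thesis by (simp add: forest_maps_empty forest_count_def)
  next
    case False
    have B: "card B \<ge> 1" using False less.prems(2) by (simp add: Suc_le_eq card_gt_0_iff)
    have "card (forest_maps S (B - S)) = forest_count (card S) (card B - card S)" if "S \<subseteq> B" for S
    proof (cases "S = {}")
      case True
      then show ?thesis using False B by (simp add: forest_maps_no_roots forest_count_def)
    next
      case False
      have "finite S" using that less.prems(2) finite_subset by blast
      moreover have "0 < card S" "card S \<le> card B"
        using False \<open>finite S\<close> card_mono[OF less.prems(2) that] by (auto simp: card_gt_0_iff)
      ultimately have "card (B - S) < card B" using card_Diff_subset[OF \<open>finite S\<close> that] by linarith
      then show ?thesis
        using less.hyps[of "B - S" S] \<open>finite S\<close> less.prems(2) that by (simp add: card_Diff_subset)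
    qed
    then have "card (forest_maps A B)
        = (\<Sum>S\<in>Pow B. card A ^ card S * forest_count (card S) (card B - card S))"
      using card_forest_maps_eq_sum[OF less.prems(3,1,2)] by simp
    also have "\<dots> = (\<Sum>s\<le>card B. (card B choose s) * (card A ^ s * forest_count s (card B - s)))"
      by (rule sum_Pow_card[OF less.prems(2)])
    also have "\<dots> = forest_count (card A) (card B)" by (rule forest_count_recurrence[OF B])
    finally show ?thesis .
  qed
qed

section \<open>The cells\<close>

lemma acyclic_if_rank:
  assumes "\<forall>(a, b)\<in>R. (r a :: nat) < r b" shows "acyclic R"
proof -
  have "(a, b) \<in> R\<^sup>+ \<Longrightarrow> r a < r b" for a b
    by (induction rule: trancl_induct) (use assms in auto)
  then show ?thesis unfolding acyclic_def by auto
qed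

lemma directed_forest_subset: "directed_forest E \<Longrightarrow> F \<subseteq> E \<Longrightarrow> directed_forest F"
  unfolding directed_forest_def using acyclic_subset by blast

lemma directed_forest_empty: "directed_forest {}"
  by (simp add: directed_forest_def acyclic_def)

lemma directed_forest_singleton: "a \<noteq> b \<Longrightarrow> directed_forest {(a, b)}"
  unfolding directed_forest_def by (auto simp: acyclic_def trancl_insert)

lemma zip_cycle_trancl: "(a, n) \<in> (set (zip (a # xs) (xs @ [n])))\<^sup>+"
proof (induction xs arbitrary: a)
  case Nil then show ?case by auto
next
  case (Cons x xs)
  have "(x, n) \<in> (set (zip (a # x # xs) ((x # xs) @ [n])))\<^sup>+"
    by (rule trancl_mono[OF Cons.IH]) auto
  moreover have "(a, x) \<in> set (zip (a # x # xs) ((x # xs) @ [n]))" by simp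
  ultimately show ?case by (meson trancl_into_trancl2)
qed

lemma zip_cycle_inj:
  "distinct (a#xs) \<Longrightarrow> distinct (a#ys) \<Longrightarrow> n \<notin> set xs \<Longrightarrow> n \<notin> set ys \<Longrightarrow>
   set (zip (a#xs) (xs@[n])) = set (zip (a#ys) (ys@[n])) \<Longrightarrow> xs = ys"
proof (induction xs arbitrary: a ys)
  case Nil
  show ?case
  proof (cases ys)
    case (Cons y ys')
    then have "(a,y) \<in> set (zip (a#ys) (ys@[n]))" by simp
    then show ?thesis using Nil Cons by auto
  qed simp
next
  case (Cons x xs)
  show ?case
  proof (cases ys)
    case Nil
    have "(a,x) \<in> set (zip (a#x#xs) ((x#xs)@[n]))" by simp
    then show ?thesis using Cons.prems Nil by auto
  next
    case (Cons y ys')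
    have L: "set (zip (a#x#xs) ((x#xs)@[n])) = insert (a,x) (set (zip (x#xs) (xs@[n])))" by simp
    have R: "set (zip (a#y#ys') ((y#ys')@[n])) = insert (a,y) (set (zip (y#ys') (ys'@[n])))" by simp
    have aL: "(a,z) \<notin> set (zip (x#xs) (xs@[n]))" for z
      using Cons.prems(1) set_zip_leftD by fastforce
    have aR: "(a,z) \<notin> set (zip (y#ys') (ys'@[n]))" for z
      using Cons.prems(2) Cons set_zip_leftD by fastforce
    have "(a,x) \<in> set (zip (a#x#xs) ((x#xs)@[n]))" by simp
    then have "(a,x) \<in> set (zip (a#ys) (ys@[n]))" by (simp only: Cons.prems(5))
    then have "(a,x) \<in> insert (a,y) (set (zip (y#ys') (ys'@[n])))" using Cons R by simp
    then have xy: "x = y" using aR by auto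
    have "set (zip (x#xs) (xs@[n])) = set (zip (y#ys') (ys'@[n]))"
    proof -
      have "insert (a,x) (set (zip (x#xs) (xs@[n]))) = insert (a,x) (set (zip (y#ys') (ys'@[n])))"
        using Cons.prems(5) Cons L R xy by simp
      then show ?thesis using aL[of x] aR[of x] by (metis insert_ident)
    qed
    then have "xs = ys'" using Cons.IH[of x ys'] Cons.prems Cons xy by auto
    then show ?thesis using Cons xy by simp
  qed
qed

text \<open>The list \<open>xs\<close> encodes the cycle \<open>n \<rightarrow> xs!0 \<rightarrow> \<dots> \<rightarrow> last xs \<rightarrow> n\<close>.\<close>

definition off_cycle :: "nat \<Rightarrow> nat list \<Rightarrow> nat set" where
  "off_cycle n xs = {1..n-1} - set xs"

definition cycle_edges :: "nat \<Rightarrow> nat list \<Rightarrow> (nat \<times> nat) set" where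
  "cycle_edges n xs = set (zip (n # xs) (xs @ [n]))"

definition cell_edges :: "nat \<Rightarrow> nat list \<Rightarrow> (nat \<Rightarrow> nat) \<Rightarrow> (nat \<times> nat) set" where
  "cell_edges n xs p =
     cycle_edges n xs \<union> (\<lambda>y. (p y, y)) ` off_cycle n xs \<union> (\<lambda>y. (n, y)) ` off_cycle n xs"

definition cell :: "nat \<Rightarrow> nat list \<Rightarrow> (nat \<Rightarrow> nat) \<Rightarrow> (nat \<times> nat) set set" where
  "cell n xs p = {\<sigma>. \<sigma> \<subseteq> cell_edges n xs p \<and> directed_forest \<sigma>}"

definition cell_params :: "nat \<Rightarrow> nat \<Rightarrow> (nat list \<times> (nat \<Rightarrow> nat)) set" where
  "cell_params n k = {(xs, p). length xs = k \<and> distinct xs \<and> set xs \<subseteq> {1..n-1}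
                               \<and> p \<in> forest_maps (set xs) (off_cycle n xs)}"

locale cell_data =
  fixes n :: nat and xs :: "nat list" and p :: "nat \<Rightarrow> nat"
  assumes two_le_n: "2 \<le> n" and distinct_xs: "distinct xs" and set_xs_subset: "set xs \<subseteq> {1..n-1}"
    and xs_nonempty: "xs \<noteq> []" and forest_map_p: "p \<in> forest_maps (set xs) (off_cycle n xs)"
begin

text \<open>The \<open>i\<close>-th cycle edge is \<open>(L!i, M!i)\<close>.\<close>

abbreviation "k \<equiv> length xs"
abbreviation "L \<equiv> n # xs"
abbreviation "M \<equiv> xs @ [n]"
abbreviation "B \<equiv> off_cycle n xs"
abbreviation "V \<equiv> cell_edges n xs p"

lemma n_notin_xs: "n \<notin> set xs"
  using set_xs_subset two_le_n by auto

lemma distinct_cycle: "distinct L"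
  using distinct_xs n_notin_xs by simp

lemma distinct_cycle_shifted: "distinct M"
  using distinct_xs n_notin_xs by simp

lemma length_pos: "1 \<le> k"
  using xs_nonempty by (cases xs) auto

lemma length_le: "k \<le> n - 1"
proof -
  have "card (set xs) \<le> card {1..n-1}" by (rule card_mono) (use set_xs_subset in auto)
  then show ?thesis using distinct_card[OF distinct_xs] by simp
qed

lemma cycle_disjoint_off_cycle: "set L \<inter> B = {}"
  unfolding off_cycle_def using two_le_n by auto

lemma xs_disjoint_off_cycle: "set xs \<inter> B = {}"
  unfolding off_cycle_def by auto

lemma finite_off_cycle: "finite B"
  unfolding off_cycle_def by simp

lemma card_off_cycle: "card B = n - 1 - k"
proof -
  have "card B = card {1..n-1} - card (set xs)"
    unfolding off_cycle_def by (rule card_Diff_subset) (use set_xs_subset in auto)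
  then show ?thesis using distinct_card[OF distinct_xs] by simp
qed

lemma p_mem: "y \<in> B \<Longrightarrow> p y \<in> set xs \<union> B"
  using forest_map_p unfolding forest_maps_def by auto

lemma p_ne_n: "y \<in> B \<Longrightarrow> p y \<noteq> n"
  using p_mem n_notin_xs cycle_disjoint_off_cycle by auto

lemma p_no_fixpoint: "y \<in> B \<Longrightarrow> p y \<noteq> y"
  using forest_map_no_fixpoint[OF forest_map_p xs_disjoint_off_cycle] by blast

lemma shifted_nth: "i \<le> k \<Longrightarrow> M!i = L!(if i < k then Suc i else 0)"
  by (auto simp: nth_append)

lemma shifted_nth_mem: "j \<le> k \<Longrightarrow> M!j \<in> set L"
  using nth_mem[of j M] by (simp add: less_Suc_eq_le)

lemma cycle_edges_nth: "cycle_edges n xs = {(L!i, M!i) | i. i \<le> k}"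
  unfolding cycle_edges_def set_zip by (auto simp: less_Suc_eq_le)

lemma cycle_edges_image: "cycle_edges n xs = (\<lambda>i. (L!i, M!i)) ` {..k}"
  unfolding cycle_edges_nth by auto

lemma cycle_edges_snd: "(a, b) \<in> cycle_edges n xs \<Longrightarrow> b \<in> set L"
  unfolding cycle_edges_def using set_zip_rightD by fastforce

lemma cycle_edges_fst: "(a, b) \<in> cycle_edges n xs \<Longrightarrow> a \<in> set L"
  unfolding cycle_edges_def using set_zip_leftD by fastforce

lemma cycle_edges_in_unique:
  assumes "(a, b) \<in> cycle_edges n xs" "(a', b) \<in> cycle_edges n xs"
  shows "a = a'"
proof -
  obtain i i' where "i \<le> k" "i' \<le> k" "a = L!i" "b = M!i" "a' = L!i'" "b = M!i'"
    using assms unfolding cycle_edges_nth by auto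
  moreover have "i = i'" using distinct_cycle_shifted calculation by (simp add: nth_eq_iff_index_eq)
  ultimately show "a = a'" by simp
qed

lemma cycle_edges_not_loop:
  assumes "(a, b) \<in> cycle_edges n xs"
  shows "a \<noteq> b"
proof -
  obtain i where i: "i \<le> k" "a = L!i" "b = M!i" using assms unfolding cycle_edges_nth by auto
  have "b = L!(if i < k then Suc i else 0)" using shifted_nth[OF i(1)] i by simp
  moreover have "i \<noteq> (if i < k then Suc i else 0)" using length_pos i(1) by auto
  ultimately show "a \<noteq> b" using distinct_cycle i by (simp add: nth_eq_iff_index_eq)
qed

lemma cell_edges_subset: "V \<subseteq> complete_digraph_edges n"
proof
  fix e assume e: "e \<in> V"
  show "e \<in> complete_digraph_edges n"
  proof (cases "e \<in> cycle_edges n xs")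
    case True
    moreover have "set L \<subseteq> {1..n}" using set_xs_subset two_le_n by force
    ultimately show ?thesis
      using cycle_edges_fst cycle_edges_snd cycle_edges_not_loop
      unfolding complete_digraph_edges_def by (cases e) fastforce
  next
    case False
    then obtain y where y: "y \<in> B" "e = (p y, y) \<or> e = (n, y)"
      using e unfolding cell_edges_def by auto
    have "y \<in> {1..n-1}" using y(1) unfolding off_cycle_def by auto
    moreover have "p y \<in> {1..n-1}" using p_mem[OF y(1)] set_xs_subset unfolding off_cycle_def by auto
    ultimately show ?thesis using y p_no_fixpoint unfolding complete_digraph_edges_def by auto
  qed
qed

lemma cell_edges_not_loop: "(a, b) \<in> V \<Longrightarrow> a \<noteq> b"
  using cell_edges_subset unfolding complete_digraph_edges_def by auto

lemma finite_cell_edges: "finite V"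
  unfolding cell_edges_def cycle_edges_def using finite_off_cycle by simp

lemma cell_edge_into_cycle: "(a, b) \<in> V \<Longrightarrow> b \<in> set L \<Longrightarrow> (a, b) \<in> cycle_edges n xs"
  using cycle_disjoint_off_cycle unfolding cell_edges_def by auto

lemma cell_edge_into_off_cycle: "(a, b) \<in> V \<Longrightarrow> b \<in> B \<Longrightarrow> a = p b \<or> a = n"
  using cycle_disjoint_off_cycle cycle_edges_snd unfolding cell_edges_def by fastforce

definition height :: "nat \<Rightarrow> nat" where
  "height y = (LEAST j. (p ^^ j) y \<in> set xs)"

definition cycle_index :: "nat \<Rightarrow> nat" where
  "cycle_index x = (THE i. i \<le> k \<and> L!i = x)"

lemma cycle_index_nth: "i \<le> k \<Longrightarrow> cycle_index (L!i) = i"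
  unfolding cycle_index_def using distinct_cycle by (intro the_equality) (auto simp: nth_eq_iff_index_eq)

lemma in_degree_le_one_cell_subset:
  assumes "\<sigma> \<subseteq> V" and "\<forall>y\<in>B. \<not> ((p y, y) \<in> \<sigma> \<and> (n, y) \<in> \<sigma>)"
    and "(x, y) \<in> \<sigma>" "(x', y) \<in> \<sigma>"
  shows "x = x'"
proof -
  have v: "(x, y) \<in> V" "(x', y) \<in> V" using assms by auto
  show ?thesis
  proof (cases "y \<in> set L")
    case True
    then show ?thesis
      using cell_edge_into_cycle[OF v(1)] cell_edge_into_cycle[OF v(2)] cycle_edges_in_unique by blast
  next
    case False
    then have "y \<in> B" using v(1) cycle_edges_snd unfolding cell_edges_def by auto
    then show ?thesis
      using cell_edge_into_off_cycle[OF v(1)] cell_edge_into_off_cycle[OF v(2)] assms by auto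
  qed
qed

text \<open>Removing the cycle edge \<open>(L!j0, M!j0)\<close> leaves a path, along which \<open>cycle_rank j0\<close>
  numbers the cycle vertices; each off-cycle vertex is ranked above the cycle by its height in
  the forest of \<open>p\<close>. Every other edge of the cell increases the rank.\<close>

definition cycle_rank :: "nat \<Rightarrow> nat \<Rightarrow> nat" where
  "cycle_rank j0 x =
     (if x \<in> set L then (if j0 < cycle_index x then cycle_index x - j0 - 1 else cycle_index x + k - j0)
      else Suc k + height x)"

lemma cycle_rank_nth:
  assumes "i \<le> k"
  shows "cycle_rank j0 (L!i) = (if j0 < i then i - j0 - 1 else i + k - j0)"
proof -
  have "L!i \<in> set L" using assms by (intro nth_mem) simp
  then have "cycle_rank j0 (L!i) = (if j0 < cycle_index (L!i) then cycle_index (L!i) - j0 - 1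
                              else cycle_index (L!i) + k - j0)"
    unfolding cycle_rank_def by (simp only: if_True)
  then show ?thesis unfolding cycle_index_nth[OF assms] .
qed

lemma cycle_rank_le:
  assumes "x \<in> set L" shows "cycle_rank j0 x \<le> k"
proof -
  obtain i where "i \<le> k" "x = L!i" using assms by (metis in_set_conv_nth length_Cons less_Suc_eq_le)
  then show ?thesis using cycle_rank_nth by auto
qed

lemma cycle_rank_less:
  assumes ab: "(a, b) \<in> V" "(a, b) \<noteq> (L!j0, M!j0)" and j0: "j0 \<le> k"
  shows "cycle_rank j0 a < cycle_rank j0 b"
proof (cases "b \<in> set L")
  case True
  then obtain i where i: "i \<le> k" "a = L!i" "b = M!i"
    using cell_edge_into_cycle[OF ab(1)] unfolding cycle_edges_nth by auto
  have "i \<noteq> j0" using i ab(2) by auto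
  have ra: "cycle_rank j0 a = (if j0 < i then i - j0 - 1 else i + k - j0)"
    unfolding i(2) by (rule cycle_rank_nth[OF i(1)])
  show ?thesis
  proof (cases "i < k")
    case True
    then have "b = L!(Suc i)" using i(3) shifted_nth[OF i(1)] by simp
    then have "cycle_rank j0 b = (if j0 < Suc i then Suc i - j0 - 1 else Suc i + k - j0)"
      using cycle_rank_nth[of "Suc i"] True by simp
    then show ?thesis using ra \<open>i \<noteq> j0\<close> True j0 by auto
  next
    case False
    then have "b = L!0" using i(3) shifted_nth[OF i(1)] by simp
    then have "cycle_rank j0 b = k - j0" using cycle_rank_nth[of 0] by simp
    then show ?thesis using ra \<open>i \<noteq> j0\<close> False i(1) j0 by auto
  qed
next
  case False
  then have bB: "b \<in> B" using ab(1) cycle_edges_snd unfolding cell_edges_def by auto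
  have rb: "cycle_rank j0 b = Suc k + height b" using False by (simp add: cycle_rank_def)
  show ?thesis
  proof (cases "a \<in> set L")
    case True then show ?thesis using cycle_rank_le[OF True, of j0] rb by linarith
  next
    case aL: False
    then have "a = p b" using cell_edge_into_off_cycle[OF ab(1) bB] by auto
    then have "height a < height b"
      unfolding height_def by (metis forest_map_height_less[OF forest_map_p xs_disjoint_off_cycle bB])
    then show ?thesis using rb aL by (simp add: cycle_rank_def)
  qed
qed

lemma acyclic_cell_subset:
  assumes "\<sigma> \<subseteq> V" "\<not> cycle_edges n xs \<subseteq> \<sigma>"
  shows "acyclic \<sigma>"
proof -
  obtain j0 where j0: "j0 \<le> k" "(L!j0, M!j0) \<notin> \<sigma>"
    using assms(2) unfolding cycle_edges_nth by auto
  have "cycle_rank j0 a < cycle_rank j0 b" if "(a, b) \<in> \<sigma>" for a b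
    using cycle_rank_less[of a b j0] that assms(1) j0 by auto
  then show ?thesis by (intro acyclic_if_rank) auto
qed

lemma directed_forest_cell_edges_iff:
  assumes "\<sigma> \<subseteq> V"
  shows "directed_forest \<sigma> \<longleftrightarrow>
           \<not> cycle_edges n xs \<subseteq> \<sigma> \<and> (\<forall>y\<in>B. \<not> ((p y, y) \<in> \<sigma> \<and> (n, y) \<in> \<sigma>))"
proof
  assume f: "directed_forest \<sigma>"
  have "\<not> cycle_edges n xs \<subseteq> \<sigma>"
  proof
    assume "cycle_edges n xs \<subseteq> \<sigma>"
    then have "(n, n) \<in> \<sigma>\<^sup>+"
      using trancl_mono[OF zip_cycle_trancl[of n n xs]] unfolding cycle_edges_def by blast
    then show False using f unfolding directed_forest_def acyclic_def by blast
  qed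
  moreover have "\<forall>y\<in>B. \<not> ((p y, y) \<in> \<sigma> \<and> (n, y) \<in> \<sigma>)"
    using f p_ne_n unfolding directed_forest_def by blast
  ultimately show "\<not> cycle_edges n xs \<subseteq> \<sigma> \<and> (\<forall>y\<in>B. \<not> ((p y, y) \<in> \<sigma> \<and> (n, y) \<in> \<sigma>))"
    by blast
next
  assume c: "\<not> cycle_edges n xs \<subseteq> \<sigma> \<and> (\<forall>y\<in>B. \<not> ((p y, y) \<in> \<sigma> \<and> (n, y) \<in> \<sigma>))"
  then have "acyclic \<sigma>" using acyclic_cell_subset[OF assms] by blast
  moreover have "\<forall>x x' y. (x, y) \<in> \<sigma> \<and> (x', y) \<in> \<sigma> \<longrightarrow> x = x'"
    using in_degree_le_one_cell_subset[OF assms] c by blast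
  ultimately show "directed_forest \<sigma>" by (simp add: directed_forest_def)
qed

lemma cell_eq:
  "cell n xs p =
     {\<sigma>. \<sigma> \<subseteq> V \<and> \<not> cycle_edges n xs \<subseteq> \<sigma> \<and> (\<forall>y\<in>B. \<not> ((p y, y) \<in> \<sigma> \<and> (n, y) \<in> \<sigma>))}"
  unfolding cell_def using directed_forest_cell_edges_iff by blast

lemma Union_cell: "\<Union>(cell n xs p) = V"
proof
  show "\<Union>(cell n xs p) \<subseteq> V" unfolding cell_def by auto
  have "{e} \<in> cell n xs p" if "e \<in> V" for e
    using that cell_edges_not_loop directed_forest_singleton unfolding cell_def by (cases e) auto
  then show "V \<subseteq> \<Union>(cell n xs p)" by blast
qed

lemma simplicial_complex_cell: "simplicial_complex (cell n xs p)"
  unfolding simplicial_complex_def cell_def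
  using directed_forest_empty directed_forest_subset finite_subset[OF _ finite_cell_edges] by auto

lemma cell_subset_tree_complex: "cell n xs p \<subseteq> tree_complex n"
  unfolding cell_def tree_complex_def using cell_edges_subset by auto

text \<open>Vertex \<open>Inl j\<close> of the bipyramid is the \<open>j\<close>-th cycle edge; the \<open>i\<close>-th copy of \<open>S\<^sup>0\<close> is
  the pair of edges \<open>(p y, y)\<close>, \<open>(n, y)\<close> for the \<open>i\<close>-th off-cycle vertex \<open>y = b i\<close>.\<close>

definition cell_edge_of :: "(nat \<Rightarrow> nat) \<Rightarrow> nat + nat \<times> bool \<Rightarrow> nat \<times> nat" where
  "cell_edge_of b w =
     (case w of Inl j \<Rightarrow> (L!j, M!j) | Inr (i, t) \<Rightarrow> if t then (p (b i), b i) else (n, b i))"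

lemma inj_on_cell_edge_of:
  assumes b: "bij_betw b {..<card B} B"
  shows "inj_on (cell_edge_of b) (bipyramid_vertices k (card B))"
proof (rule inj_onI)
  have bi: "inj_on b {..<card B}" and bin: "\<And>i. i < card B \<Longrightarrow> b i \<in> B"
    using b unfolding bij_betw_def by auto
  have cyc_off: "M!j \<noteq> b i" "b i \<noteq> M!j" if "j \<le> k" "i < card B" for i j
    using shifted_nth_mem[OF that(1)] cycle_disjoint_off_cycle bin[OF that(2)] by auto
  fix w w' assume w: "w \<in> bipyramid_vertices k (card B)" "w' \<in> bipyramid_vertices k (card B)"
    and eq: "cell_edge_of b w = cell_edge_of b w'"
  show "w = w'"
  proof (cases w; cases w')
    fix j j' assume "w = Inl j" "w' = Inl j'"
    then show ?thesis using w eq distinct_cycle by (simp add: cell_edge_of_def nth_eq_iff_index_eq)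
  next
    fix j q assume "w = Inl j" "w' = Inr q"
    then show ?thesis using w eq cyc_off by (cases q; cases "snd q") (auto simp: cell_edge_of_def)
  next
    fix q j assume "w = Inr q" "w' = Inl j"
    then show ?thesis using w eq cyc_off by (cases q; cases "snd q") (auto simp: cell_edge_of_def)
  next
    fix q q' assume wq: "w = Inr q" "w' = Inr q'"
    obtain i t i' t' where it: "q = (i, t)" "q' = (i', t')" by (cases q, cases q')
    then have i: "i < card B" "i' < card B" using w wq by auto
    have "b i = b i'" using eq wq it by (cases t; cases t') (auto simp: cell_edge_of_def)
    then have "i = i'" using bi i by (auto dest: inj_onD)
    moreover have "t = t'"
      using eq wq it \<open>i = i'\<close> p_ne_n[OF bin[OF i(1)]] by (cases t; cases t') (auto simp: cell_edge_of_def)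
    ultimately show ?thesis using wq it by simp
  qed
qed

lemma cell_edge_of_image:
  assumes b: "b ` {..<card B} = B"
  shows "cell_edge_of b ` bipyramid_vertices k (card B) = V"
proof -
  have vertices: "bipyramid_vertices k (card B)
      = Inl ` {..k} \<union> (\<lambda>i. Inr (i, True)) ` {..<card B} \<union> (\<lambda>i. Inr (i, False)) ` {..<card B}"
    unfolding bipyramid_vertices_def by (auto simp: UNIV_bool)
  have "cell_edge_of b ` Inl ` {..k} = cycle_edges n xs"
    unfolding cycle_edges_image by (simp add: image_image cell_edge_of_def)
  moreover have "cell_edge_of b ` (\<lambda>i. Inr (i, True)) ` {..<card B} = (\<lambda>y. (p y, y)) ` b ` {..<card B}"
    by (simp add: image_image cell_edge_of_def)
  moreover have "cell_edge_of b ` (\<lambda>i. Inr (i, False)) ` {..<card B} = (\<lambda>y. (n, y)) ` b ` {..<card B}"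
    by (simp add: image_image cell_edge_of_def)
  ultimately show ?thesis unfolding vertices cell_edges_def b by (simp add: image_Un)
qed

lemma simp_iso_cell_bipyramid: "simp_iso (cell n xs p) (bipyramid (simplex_boundary k) (card B))"
proof -
  obtain b where b: "bij_betw b {..<card B} B"
    using ex_bij_betw_nat_finite[OF finite_off_cycle] by (auto simp: lessThan_atLeast0)
  then have bB: "b ` {..<card B} = B" unfolding bij_betw_def by auto
  have F: "bij_betw (cell_edge_of b) (bipyramid_vertices k (card B)) V"
    unfolding bij_betw_def using inj_on_cell_edge_of[OF b] cell_edge_of_image[OF bB] by blast
  have "cell_edge_of b ` Inl ` {..k} = cycle_edges n xs"
    unfolding cycle_edges_image by (simp add: image_image cell_edge_of_def)
  moreover have "(\<forall>y\<in>B. \<not> ((p y, y) \<in> \<sigma> \<and> (n, y) \<in> \<sigma>)) \<longleftrightarrow>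
      (\<forall>i<card B. \<not> (cell_edge_of b (Inr (i, True)) \<in> \<sigma> \<and> cell_edge_of b (Inr (i, False)) \<in> \<sigma>))"
    for \<sigma>
  proof -
    have "(\<forall>y\<in>B. \<not> ((p y, y) \<in> \<sigma> \<and> (n, y) \<in> \<sigma>))
        \<longleftrightarrow> (\<forall>y\<in>b ` {..<card B}. \<not> ((p y, y) \<in> \<sigma> \<and> (n, y) \<in> \<sigma>))"
      using bB by simp
    then show ?thesis by (auto simp: cell_edge_of_def)
  qed
  ultimately have "cell n xs p = {\<sigma>. \<sigma> \<subseteq> V \<and> \<not> cell_edge_of b ` Inl ` {..k} \<subseteq> \<sigma> \<and>
      (\<forall>i<card B. \<not> (cell_edge_of b (Inr (i, True)) \<in> \<sigma> \<and> cell_edge_of b (Inr (i, False)) \<in> \<sigma>))}"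
    unfolding cell_eq by simp
  then show ?thesis
    using simp_iso_sym[OF simp_iso_bipyramid_simplex_boundary[OF length_pos F]] by simp
qed

lemma simplicial_sphere_cell: "simplicial_sphere (cell n xs p) (int n - 2)"
proof -
  have "realization (cell n xs p) homeomorphic_space realization (bipyramid (simplex_boundary k) (card B))"
    by (rule simp_iso_homeomorphic_realization[OF simp_iso_cell_bipyramid])
  also have "\<dots> homeomorphic_space nsphere (k - 1 + card B)"
    by (rule realization_bipyramid_homeomorphic_nsphere[OF length_pos])
  also have "k - 1 + card B = nat (int n - 2)" using card_off_cycle length_le length_pos two_le_n by simp
  finally show ?thesis unfolding simplicial_sphere_def using simplicial_complex_cell two_le_n by simp
qed

text \<open>The cell determines its parameters: the cycle vertices other than \<open>n\<close> are the vertices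
  with a single incoming edge in \<open>V\<close>, the cycle edges are the edges into them, and \<open>p y\<close> is the
  source other than \<open>n\<close> of an edge into \<open>y\<close>.\<close>

lemma set_xs_eq: "set xs = {y \<in> {1..n-1}. \<forall>a a'. (a, y) \<in> V \<and> (a', y) \<in> V \<longrightarrow> a = a'}"
proof -
  have "y \<in> set xs \<longleftrightarrow> (\<forall>a a'. (a, y) \<in> V \<and> (a', y) \<in> V \<longrightarrow> a = a')" if "y \<in> {1..n-1}" for y
  proof
    assume "y \<in> set xs"
    then show "\<forall>a a'. (a, y) \<in> V \<and> (a', y) \<in> V \<longrightarrow> a = a'"
      using cell_edge_into_cycle cycle_edges_in_unique by (meson list.set_intros(2))
  next
    assume uniq: "\<forall>a a'. (a, y) \<in> V \<and> (a', y) \<in> V \<longrightarrow> a = a'"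
    show "y \<in> set xs"
    proof (rule ccontr)
      assume "y \<notin> set xs"
      then have "y \<in> B" using that by (simp add: off_cycle_def)
      then show False using uniq p_ne_n unfolding cell_edges_def by blast
    qed
  qed
  then show ?thesis using set_xs_subset by auto
qed

lemma cycle_edges_eq: "cycle_edges n xs = {e \<in> V. snd e \<in> set L}"
proof (intro equalityI subsetI)
  fix e assume "e \<in> cycle_edges n xs"
  then show "e \<in> {e \<in> V. snd e \<in> set L}"
    using cycle_edges_snd unfolding cell_edges_def by (cases e) auto
next
  fix e assume "e \<in> {e \<in> V. snd e \<in> set L}"
  then show "e \<in> cycle_edges n xs" using cell_edge_into_cycle by (cases e) auto
qed

lemma p_eq: "p = (\<lambda>y. if y \<in> B then THE a. (a, y) \<in> V \<and> a \<noteq> n else undefined)"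
proof
  fix y
  show "p y = (if y \<in> B then THE a. (a, y) \<in> V \<and> a \<noteq> n else undefined)"
  proof (cases "y \<in> B")
    case True
    have "(THE a. (a, y) \<in> V \<and> a \<noteq> n) = p y"
    proof (rule the_equality)
      show "(p y, y) \<in> V \<and> p y \<noteq> n" using True p_ne_n unfolding cell_edges_def by auto
      show "\<And>a. (a, y) \<in> V \<and> a \<noteq> n \<Longrightarrow> a = p y" using cell_edge_into_off_cycle True by blast
    qed
    then show ?thesis using True by simp
  next
    case False
    then show ?thesis using forest_map_p unfolding forest_maps_def by auto
  qed
qed

end

lemma cell_inj:
  assumes P: "cell_data n xs p" and Q: "cell_data n ys q" and eq: "cell n xs p = cell n ys q"
  shows "xs = ys \<and> p = q"
proof -
  have V: "cell_edges n xs p = cell_edges n ys q"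
    using cell_data.Union_cell[OF P] cell_data.Union_cell[OF Q] eq by metis
  then have "set xs = set ys" using cell_data.set_xs_eq[OF P] cell_data.set_xs_eq[OF Q] by simp
  then have "cycle_edges n xs = cycle_edges n ys"
    using cell_data.cycle_edges_eq[OF P] cell_data.cycle_edges_eq[OF Q] V by simp
  then have xy: "xs = ys"
    unfolding cycle_edges_def
    using zip_cycle_inj[of n xs ys n] cell_data.distinct_cycle[OF P] cell_data.distinct_cycle[OF Q]
      cell_data.n_notin_xs[OF P] cell_data.n_notin_xs[OF Q] by simp
  have "p y = q y" for y
  proof -
    have "p y = (if y \<in> off_cycle n xs then THE a. (a, y) \<in> cell_edges n xs p \<and> a \<noteq> n else undefined)"
      by (rule fun_cong[OF cell_data.p_eq[OF P]])
    also have "\<dots> = (if y \<in> off_cycle n ys then THE a. (a, y) \<in> cell_edges n ys q \<and> a \<noteq> n else undefined)"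
      using V xy by simp
    also have "\<dots> = q y" by (rule fun_cong[OF cell_data.p_eq[OF Q], symmetric])
    finally show ?thesis .
  qed
  then show ?thesis using xy by auto
qed

section \<open>Every forest lies in a cell\<close>

lemma chain_trancl:
  assumes "\<forall>i<b. (c (Suc i), c i) \<in> E" "a < b"
  shows "(c b, c a) \<in> E\<^sup>+"
  using assms
proof (induction b)
  case 0 then show ?case by simp
next
  case (Suc b)
  show ?case
  proof (cases "a = b")
    case True then show ?thesis using Suc.prems by auto
  next
    case False
    then have "(c b, c a) \<in> E\<^sup>+" using Suc by auto
    moreover have "(c (Suc b), c b) \<in> E" using Suc.prems by auto
    ultimately show ?thesis by (rule trancl_into_trancl2[rotated])
  qed
qed

lemma chain_inj_if_acyclic:
  assumes "acyclic E" "\<forall>i<b. (c (Suc i), c i) \<in> E" "i \<le> b" "j \<le> b" "i \<noteq> j"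
  shows "c i \<noteq> c j"
proof -
  have "c i \<noteq> c j" if "i < j" "j \<le> b" for i j
    using chain_trancl[of j c E i] assms(1,2) that unfolding acyclic_def by force
  then show ?thesis using assms(3-5) by (metis nat_neq_iff)
qed

lemma not_acyclic_if_infinite_chain:
  assumes "finite S" "\<forall>i. c i \<in> S" "\<forall>i. (c (Suc i), c i) \<in> E"
  shows "\<not> acyclic E"
proof
  assume "acyclic E"
  then have "inj_on c {..card S}"
    using chain_inj_if_acyclic[of E "card S" c] assms(3) by (auto intro: inj_onI)
  then have "card {..card S} \<le> card S" using card_inj_on_le assms(1,2) by blast
  then show False by simp
qed

locale forest_in_tree_complex =
  fixes n :: nat and E :: "(nat \<times> nat) set"
  assumes two_le_n: "2 \<le> n" and E_mem: "E \<in> tree_complex n"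
begin

lemma directed_forest_E: "directed_forest E"
  using E_mem unfolding tree_complex_def by auto

lemma acyclic_E: "acyclic E"
  using directed_forest_E unfolding directed_forest_def by auto

lemma E_in_unique: "(x, y) \<in> E \<Longrightarrow> (x', y) \<in> E \<Longrightarrow> x = x'"
  using directed_forest_E unfolding directed_forest_def by auto

lemma E_edge: "(x, y) \<in> E \<Longrightarrow> x \<in> {1..n} \<and> y \<in> {1..n} \<and> x \<noteq> y"
  using E_mem unfolding tree_complex_def complete_digraph_edges_def by auto

definition has_parent :: "nat \<Rightarrow> bool" where
  "has_parent y \<longleftrightarrow> (\<exists>z. (z, y) \<in> E)"

definition parent :: "nat \<Rightarrow> nat" where
  "parent y = (if has_parent y then THE z. (z, y) \<in> E else y)"

lemma parent_edge: "has_parent y \<Longrightarrow> (parent y, y) \<in> E"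
  unfolding parent_def has_parent_def using E_in_unique by (auto intro: theI2)

lemma parent_eq: "(z, y) \<in> E \<Longrightarrow> parent y = z"
  using parent_edge E_in_unique unfolding has_parent_def by blast

lemma parent_range: "x \<in> {1..n} \<Longrightarrow> parent x \<in> {1..n}"
  using parent_edge E_edge by (cases "has_parent x") (auto simp: parent_def)

lemma funpow_parent_range: "x \<in> {1..n} \<Longrightarrow> (parent ^^ i) x \<in> {1..n}"
proof (induction i)
  case (Suc i) then show ?case using parent_range by (metis comp_apply funpow.simps(2))
qed simp

lemma ex_root_ancestor:
  assumes "x \<in> {1..n}"
  shows "\<exists>j. \<not> has_parent ((parent ^^ j) x) \<and> (\<forall>i<j. has_parent ((parent ^^ i) x))"
proof -
  have "\<exists>j. \<not> has_parent ((parent ^^ j) x)"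
  proof (rule ccontr)
    assume "\<not> (\<exists>j. \<not> has_parent ((parent ^^ j) x))"
    then have "\<forall>i. ((parent ^^ Suc i) x, (parent ^^ i) x) \<in> E" using parent_edge by auto
    then show False
      using not_acyclic_if_infinite_chain[of "{1..n}" "\<lambda>i. (parent ^^ i) x" E]
        funpow_parent_range[OF assms] acyclic_E by auto
  qed
  then show ?thesis using exists_least_iff[of "\<lambda>j. \<not> has_parent ((parent ^^ j) x)"] by auto
qed

text \<open>A list \<open>xs\<close> can serve as the cycle of a cell containing \<open>E\<close> as soon as \<open>E\<close> misses an
  edge of the cycle and enters the cycle vertices only along cycle edges. The forest map of the
  cell keeps the parent in \<open>E\<close> of each other vertex unless that parent is \<open>n\<close> or missing; in
  that case \<open>E\<close> uses at most the edge from \<open>n\<close>, and any vertex of the cycle will do.\<close>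

definition cycle_compatible :: "nat list \<Rightarrow> bool" where
  "cycle_compatible xs \<longleftrightarrow> distinct xs \<and> set xs \<subseteq> {1..n-1} \<and> xs \<noteq> [] \<and> \<not> cycle_edges n xs \<subseteq> E
     \<and> (\<forall>x y. (x, y) \<in> E \<longrightarrow> y \<in> set (n # xs) \<longrightarrow> (x, y) \<in> cycle_edges n xs)"

definition attach :: "nat list \<Rightarrow> nat \<Rightarrow> nat" where
  "attach xs y = (if y \<in> off_cycle n xs
                  then (if has_parent y \<and> parent y \<noteq> n then parent y else hd xs) else undefined)"

lemma attach_mem:
  assumes "xs \<noteq> []" "y \<in> off_cycle n xs"
  shows "attach xs y \<in> set xs \<union> off_cycle n xs"
proof (cases "has_parent y \<and> parent y \<noteq> n")
  case True
  then have "parent y \<in> {1..n-1}" using parent_edge E_edge by fastforce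
  then show ?thesis using True assms(2) unfolding attach_def off_cycle_def by auto
next
  case False then show ?thesis using assms by (auto simp: attach_def)
qed

lemma attach_forest_map:
  assumes xs: "xs \<noteq> []"
  shows "attach xs \<in> forest_maps (set xs) (off_cycle n xs)"
  unfolding forest_maps_def
proof (intro CollectI conjI ballI allI impI)
  fix y assume y: "y \<in> off_cycle n xs"
  show "attach xs y \<in> set xs \<union> off_cycle n xs" by (rule attach_mem[OF xs y])
  show "\<exists>j. (attach xs ^^ j) y \<in> set xs"
  proof (rule ccontr)
    assume none: "\<not> (\<exists>j. (attach xs ^^ j) y \<in> set xs)"
    have off: "(attach xs ^^ j) y \<in> off_cycle n xs" for j
    proof (induction j)
      case (Suc j)
      have "attach xs ((attach xs ^^ j) y) \<in> set xs \<union> off_cycle n xs"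
        by (rule attach_mem[OF xs Suc.IH])
      moreover have "(attach xs ^^ Suc j) y \<notin> set xs" using none by blast
      ultimately show ?case by auto
    qed (use y in simp)
    have "((attach xs ^^ Suc j) y, (attach xs ^^ j) y) \<in> E" for j
    proof -
      let ?z = "(attach xs ^^ j) y"
      have "attach xs ?z \<notin> set xs" using none by (metis funpow.simps(2) o_apply)
      then have "has_parent ?z \<and> parent ?z \<noteq> n"
        using off[of j] hd_in_set[OF xs] by (auto simp: attach_def split: if_splits)
      then show ?thesis using off[of j] parent_edge by (simp add: attach_def)
    qed
    moreover have "finite (off_cycle n xs)" by (simp add: off_cycle_def)
    ultimately show False
      using not_acyclic_if_infinite_chain[of "off_cycle n xs" "\<lambda>j. (attach xs ^^ j) y" E]
        off acyclic_E by auto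
  qed
qed (simp add: attach_def)

lemma E_subset_cell_edges:
  assumes "cycle_compatible xs"
  shows "E \<subseteq> cell_edges n xs (attach xs)"
proof (clarify)
  fix x y assume e: "(x, y) \<in> E"
  show "(x, y) \<in> cell_edges n xs (attach xs)"
  proof (cases "y \<in> set (n # xs)")
    case True then show ?thesis using assms e unfolding cycle_compatible_def cell_edges_def by auto
  next
    case False
    then have y: "y \<in> off_cycle n xs" using E_edge[OF e] unfolding off_cycle_def by auto
    have "x = n \<or> attach xs y = x"
      using e y parent_eq unfolding attach_def has_parent_def by auto
    then show ?thesis using y unfolding cell_edges_def by auto
  qed
qed

lemma cell_containing_if_cycle_compatible:
  assumes "cycle_compatible xs"
  shows "cell_data n xs (attach xs) \<and> E \<in> cell n xs (attach xs)"
proof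
  show "cell_data n xs (attach xs)"
    using assms two_le_n attach_forest_map unfolding cycle_compatible_def by unfold_locales auto
  show "E \<in> cell n xs (attach xs)"
    using E_subset_cell_edges[OF assms] directed_forest_E unfolding cell_def by auto
qed

definition ancestor_path :: "nat \<Rightarrow> nat list" where
  "ancestor_path j = map (\<lambda>i. (parent ^^ (j - i)) n) [0..<j]"

lemma set_ancestor_path: "set (ancestor_path j) = (\<lambda>i. (parent ^^ i) n) ` {1..j}"
proof -
  have "(\<lambda>i. (parent ^^ (j - i)) n) ` {0..<j} = (\<lambda>i. (parent ^^ i) n) ` {1..j}"
  proof (intro equalityI subsetI)
    fix z assume "z \<in> (\<lambda>i. (parent ^^ i) n) ` {1..j}"
    then obtain i where "i \<in> {1..j}" "z = (parent ^^ (j - (j - i))) n" by auto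
    then show "z \<in> (\<lambda>i. (parent ^^ (j - i)) n) ` {0..<j}" by (intro image_eqI[of _ _ "j - i"]) auto
  qed auto
  then show ?thesis by (simp add: ancestor_path_def)
qed

lemma ancestor_path_cycle_edge:
  assumes "i < j"
  shows "((parent ^^ Suc i) n, (parent ^^ i) n) \<in> cycle_edges n (ancestor_path j)"
proof -
  let ?xs = "ancestor_path j"
  have len: "length ?xs = j" by (simp add: ancestor_path_def)
  define t where "t = j - i - 1"
  have jt: "j - i = Suc t" and "j - t = Suc i" using assms by (simp_all add: t_def)
  have "(n # ?xs) ! (j - i) = ?xs ! t" unfolding jt by simp
  also have "\<dots> = (parent ^^ Suc i) n"
    using assms \<open>j - t = Suc i\<close> by (simp add: ancestor_path_def t_def)
  finally have "(n # ?xs) ! (j - i) = (parent ^^ Suc i) n" .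
  moreover have "(?xs @ [n]) ! (j - i) = (parent ^^ i) n"
    using assms len by (cases "i = 0") (simp_all add: nth_append ancestor_path_def)
  moreover have "j - i < min (length (n # ?xs)) (length (?xs @ [n]))" using len by simp
  then have "((n # ?xs) ! (j - i), (?xs @ [n]) ! (j - i)) \<in> cycle_edges n ?xs"
    unfolding cycle_edges_def set_zip by blast
  ultimately show ?thesis by simp
qed

lemma cycle_compatible_ancestor_path:
  assumes root: "\<not> has_parent ((parent ^^ j) n)" and path: "\<forall>i<j. has_parent ((parent ^^ i) n)"
    and "0 < j"
  shows "cycle_compatible (ancestor_path j)"
proof -
  let ?xs = "ancestor_path j"
  have chain: "\<forall>i<j. ((parent ^^ Suc i) n, (parent ^^ i) n) \<in> E" using path parent_edge by auto
  have inj: "(parent ^^ a) n \<noteq> (parent ^^ b) n" if "a \<le> j" "b \<le> j" "a \<noteq> b" for a b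
    using chain_inj_if_acyclic[OF acyclic_E, of j "\<lambda>i. (parent ^^ i) n"] chain that by auto
  have "distinct ?xs"
    unfolding distinct_conv_nth
  proof (intro allI impI)
    fix a b assume "a < length ?xs" "b < length ?xs" "a \<noteq> b"
    then show "?xs ! a \<noteq> ?xs ! b" using inj[of "j - a" "j - b"] by (simp add: ancestor_path_def)
  qed
  moreover have "set ?xs \<subseteq> {1..n-1}"
  proof
    fix z assume "z \<in> set ?xs"
    then obtain i where i: "i \<in> {1..j}" "z = (parent ^^ i) n" by (auto simp: set_ancestor_path)
    then have "z \<noteq> n" using inj[of 0 i] by auto
    moreover have "z \<in> {1..n}" using i funpow_parent_range[of n] two_le_n by auto
    ultimately show "z \<in> {1..n-1}" by auto
  qed
  moreover have "?xs \<noteq> []" using \<open>0 < j\<close> by (simp add: ancestor_path_def)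
  moreover have "?xs = (parent ^^ j) n # tl ?xs"
    using \<open>0 < j\<close> by (simp add: ancestor_path_def upt_conv_Cons)
  then have "(n, (parent ^^ j) n) \<in> cycle_edges n ?xs"
    unfolding cycle_edges_def by (metis Cons_eq_appendI list.set_intros(1) zip_Cons_Cons)
  then have "\<not> cycle_edges n ?xs \<subseteq> E" using root unfolding has_parent_def by blast
  moreover have "(x, y) \<in> cycle_edges n ?xs" if e: "(x, y) \<in> E" and y: "y \<in> set (n # ?xs)" for x y
  proof -
    obtain i where i: "i \<le> j" "y = (parent ^^ i) n"
    proof (cases "y = n")
      case True then show ?thesis using that[of 0] by simp
    next
      case False then show ?thesis using that y by (auto simp: set_ancestor_path)
    qed
    then have "i < j" using root e unfolding has_parent_def by (metis le_neq_implies_less)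
    moreover have "x = (parent ^^ Suc i) n" using parent_eq[OF e] i by simp
    ultimately show ?thesis using ancestor_path_cycle_edge i by simp
  qed
  ultimately show ?thesis unfolding cycle_compatible_def by blast
qed

lemma cycle_compatible_singleton:
  assumes n: "\<not> has_parent n"
  shows "\<exists>a. cycle_compatible [a]"
proof -
  obtain a where a: "a \<in> {1..n}" "a \<noteq> n" "\<And>z. (z, a) \<in> E \<Longrightarrow> z = n"
  proof (cases "\<exists>c. (n, c) \<in> E")
    case True
    then obtain c where "(n, c) \<in> E" by blast
    then show ?thesis using that[of c] E_edge E_in_unique by blast
  next
    case False
    have "1 \<in> {1..n}" using two_le_n by auto
    then obtain j where j: "\<not> has_parent ((parent ^^ j) 1)" "\<forall>i<j. has_parent ((parent ^^ i) 1)"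
      using ex_root_ancestor by blast
    have "(parent ^^ j) 1 \<noteq> n"
    proof (cases j)
      case 0 then show ?thesis using two_le_n by simp
    next
      case (Suc j')
      then have "((parent ^^ j) 1, (parent ^^ j') 1) \<in> E" using j(2) parent_edge by simp
      then show ?thesis using False by auto
    qed
    then show ?thesis
      using that[of "(parent ^^ j) 1"] j(1) funpow_parent_range \<open>1 \<in> {1..n}\<close>
      unfolding has_parent_def by blast
  qed
  have "cycle_edges n [a] = {(n, a), (a, n)}" by (simp add: cycle_edges_def)
  then have "cycle_compatible [a]"
    using a n unfolding cycle_compatible_def has_parent_def by auto
  then show ?thesis by blast
qed

lemma ex_cell_containing: "\<exists>xs p. cell_data n xs p \<and> E \<in> cell n xs p"
proof -
  have "\<exists>xs. cycle_compatible xs"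
  proof (cases "has_parent n")
    case True
    obtain j where j: "\<not> has_parent ((parent ^^ j) n)" "\<forall>i<j. has_parent ((parent ^^ i) n)"
      using ex_root_ancestor[of n] two_le_n by auto
    then have "0 < j" using True by (cases j) auto
    then show ?thesis using cycle_compatible_ancestor_path[OF j] by blast
  next
    case False then show ?thesis using cycle_compatible_singleton by blast
  qed
  then show ?thesis using cell_containing_if_cycle_compatible by blast
qed

end

section \<open>Counting the cells\<close>

definition falling_fact :: "nat \<Rightarrow> nat \<Rightarrow> nat" where
  "falling_fact N k = \<Prod>{N - k + 1..N}"

definition cell_count :: "nat \<Rightarrow> nat \<Rightarrow> nat" where
  "cell_count N k = falling_fact N k * forest_count k (N - k)"

lemma cell_params_eq_Sigma:
  "cell_params n k = (SIGMA xs:{xs. length xs = k \<and> distinct xs \<and> set xs \<subseteq> {1..n-1}}.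
                        forest_maps (set xs) (off_cycle n xs))"
  unfolding cell_params_def by auto

lemma finite_cycle_lists: "finite {xs. length xs = k \<and> distinct xs \<and> set xs \<subseteq> {1..n - 1 :: nat}}"
  by (rule finite_subset[OF _ finite_subset_distinct[OF finite_atLeastAtMost]]) auto

lemma finite_cell_params: "finite (cell_params n k)"
  using finite_cycle_lists unfolding cell_params_eq_Sigma
  by (rule finite_SigmaI) (simp add: finite_forest_maps off_cycle_def)

lemma card_cell_params:
  assumes "k \<le> n - 1"
  shows "card (cell_params n k) = cell_count (n - 1) k"
proof -
  let ?L = "{xs. length xs = k \<and> distinct xs \<and> set xs \<subseteq> {1..n-1}}"
  have "card (forest_maps (set xs) (off_cycle n xs)) = forest_count k (n - 1 - k)"
    if "xs \<in> ?L" for xs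
  proof -
    have xs: "length xs = k" "distinct xs" "set xs \<subseteq> {1..n-1}" using that by auto
    have "card (off_cycle n xs) = n - 1 - k"
      unfolding off_cycle_def using card_Diff_subset[OF _ xs(3)] distinct_card[OF xs(2)] xs(1) by simp
    moreover have "card (set xs) = k" using distinct_card[OF xs(2)] xs(1) by simp
    ultimately show ?thesis
      using card_forest_maps[of "set xs" "off_cycle n xs"] by (auto simp: off_cycle_def)
  qed
  moreover have "finite ?L" "\<forall>xs\<in>?L. finite (forest_maps (set xs) (off_cycle n xs))"
    using finite_cycle_lists by (auto simp: finite_forest_maps off_cycle_def)
  ultimately have "card (cell_params n k) = card ?L * forest_count k (n - 1 - k)"
    unfolding cell_params_eq_Sigma by (simp add: card_SigmaI)
  also have "card ?L = falling_fact (n - 1) k"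
    using card_lists_distinct_length_eq[of "{1..n-1}" k] assms by (simp add: falling_fact_def)
  finally show ?thesis by (simp add: cell_count_def)
qed

lemma falling_fact_Suc: "k < N \<Longrightarrow> falling_fact N (Suc k) = (N - k) * falling_fact N k"
  unfolding falling_fact_def
  by (metis Suc_diff_Suc Suc_eq_plus1 diff_le_self le_add_diff_inverse2 plus_1_eq_Suc
      prod.atLeast_Suc_atMost)

text \<open>The sum telescopes: \<open>cell_count N k = T k - T (k + 1)\<close> for \<open>T k = N!/(N-k)! * N^(N-k)\<close>.\<close>

lemma sum_cell_count:
  assumes N: "1 \<le> N"
  shows "(\<Sum>k\<in>{1..N}. cell_count N k) = N ^ N"
proof -
  define T where "T k = (if k \<le> N then int (falling_fact N k * N ^ (N - k)) else 0)" for k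
  have step: "int (cell_count N k) = T k - T (Suc k)" if k: "1 \<le> k" "k \<le> N" for k
  proof (cases "k < N")
    case True
    have sk: "N - k = Suc (N - Suc k)" using True by simp
    have e1: "int (falling_fact N k * N ^ (N - k))
        = int (falling_fact N k) * int N * int N ^ (N - Suc k)"
      by (subst sk) (simp add: algebra_simps)
    have e2: "int ((N - k) * falling_fact N k * N ^ (N - Suc k))
        = (int N - int k) * int (falling_fact N k) * int N ^ (N - Suc k)"
      using True by (simp add: of_nat_diff)
    have "T k - T (Suc k)
        = int (falling_fact N k * N ^ (N - k)) - int ((N - k) * falling_fact N k * N ^ (N - Suc k))"
      unfolding T_def using True falling_fact_Suc[OF True] by simp
    also have "\<dots> = int k * int (falling_fact N k) * int N ^ (N - Suc k)"
      unfolding e1 e2 by (simp add: algebra_simps)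
    finally have a: "T k - T (Suc k) = int k * int (falling_fact N k) * int N ^ (N - Suc k)" .
    have "cell_count N k = falling_fact N k * (k * N ^ (N - Suc k))"
      unfolding cell_count_def forest_count_def using True by simp
    then show ?thesis using a by (simp add: algebra_simps)
  next
    case False
    then have "k = N" using k by simp
    then show ?thesis unfolding T_def cell_count_def forest_count_def by simp
  qed
  have "int (\<Sum>k\<in>{1..N}. cell_count N k) = (\<Sum>k\<in>{1..N}. T k - T (Suc k))"
    by (simp add: step)
  also have "\<dots> = (\<Sum>k = 1..<Suc N. (- T (Suc k)) - (- T k))"
    by (rule sum.cong) auto
  also have "\<dots> = - T (Suc N) - (- T 1)" by (rule sum_Suc_diff') simp
  also have "\<dots> = int (N ^ N)"
  proof -
    have "falling_fact N 1 = N" unfolding falling_fact_def using N by simp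
    then have "T 1 = int (N * N ^ (N - 1))" unfolding T_def using N by simp
    also have "N * N ^ (N - 1) = N ^ N" using N by (cases N) auto
    finally show ?thesis unfolding T_def by simp
  qed
  finally show ?thesis by (simp only: of_nat_eq_iff)
qed

lemma real_falling_fact:
  assumes "k \<le> N"
  shows "real (falling_fact N k) = fact N / fact (N - k)"
proof -
  have "fact N = fact (N - k) * \<Prod>{Suc (N - k)..N}" by (rule fact_eq_fact_times) simp
  then have "real (fact N) = real (fact (N - k)) * real (falling_fact N k)"
    unfolding falling_fact_def using assms by (simp add: Suc_diff_le)
  then show ?thesis by (simp add: field_simps)
qed

lemma real_cell_count:
  assumes k: "1 \<le> k" "k \<le> n - 1" and n: "2 \<le> n"
  shows "real (cell_count (n - 1) k)
         = real (fact (n - 1)) / real (fact (n - k - 1)) * real k * real (n - 1) powi (int n - int k - 2)"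
proof (cases "k = n - 1")
  case True
  then have "int n - int k - 2 = -1" using n by simp
  moreover have "real k * real (n - 1) powi (-1) = 1" using True k by (simp add: power_int_minus)
  ultimately show ?thesis
    using True real_falling_fact[of k "n - 1"] by (simp add: cell_count_def forest_count_def)
next
  case False
  then have "k < n - 1" using k by simp
  then have e: "int n - int k - 2 = int (n - 1 - k - 1)" by linarith
  have "forest_count k (n - 1 - k) = k * (n - 1) ^ (n - 1 - k - 1)"
    using \<open>k < n - 1\<close> by (auto simp: forest_count_def)
  then show ?thesis
    unfolding cell_count_def e using real_falling_fact[of k "n - 1"] k by (simp add: diff_diff_add)
qed

section \<open>The cover of the tree complex\<close>

definition tree_cells :: "nat \<Rightarrow> (nat \<times> nat) set set set" where
  "tree_cells n = {cell n xs p | xs p. cell_data n xs p}"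

lemma cell_data_iff:
  "cell_data n xs p \<longleftrightarrow> 2 \<le> n \<and> (xs, p) \<in> (\<Union>k\<in>{1..n-1}. cell_params n k)"
  using cell_data.length_pos cell_data.length_le
  unfolding cell_params_def cell_data_def by fastforce

lemma tree_cells_eq_image:
  assumes "2 \<le> n"
  shows "tree_cells n = (\<lambda>(xs, p). cell n xs p) ` (\<Union>k\<in>{1..n-1}. cell_params n k)"
  using assms unfolding tree_cells_def cell_data_iff by fast

lemma inj_on_cell:
  assumes "2 \<le> n"
  shows "inj_on (\<lambda>(xs, p). cell n xs p) (\<Union>k\<in>{1..n-1}. cell_params n k)"
proof (rule inj_onI)
  fix a b
  assume "a \<in> (\<Union>k\<in>{1..n-1}. cell_params n k)" "b \<in> (\<Union>k\<in>{1..n-1}. cell_params n k)"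
    and eq: "(\<lambda>(xs, p). cell n xs p) a = (\<lambda>(xs, p). cell n xs p) b"
  moreover obtain xs p ys q where ab: "a = (xs, p)" "b = (ys, q)" by (cases a, cases b)
  ultimately have "cell_data n xs p" "cell_data n ys q" "cell n xs p = cell n ys q"
    using assms by (simp_all add: cell_data_iff)
  from cell_inj[OF this] show "a = b" using ab by simp
qed

lemma card_tree_cells:
  assumes "2 \<le> n"
  shows "card (tree_cells n) = (n - 1) ^ (n - 1)"
proof -
  have "card (tree_cells n) = card (\<Union>k\<in>{1..n-1}. cell_params n k)"
    unfolding tree_cells_eq_image[OF assms] using inj_on_cell[OF assms] by (rule card_image)
  also have "\<dots> = (\<Sum>k\<in>{1..n-1}. card (cell_params n k))"
    by (rule card_UN_disjoint) (simp_all add: finite_cell_params, auto simp: cell_params_def)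
  also have "\<dots> = (\<Sum>k\<in>{1..n-1}. cell_count (n - 1) k)" by (simp add: card_cell_params)
  also have "\<dots> = (n - 1) ^ (n - 1)" by (rule sum_cell_count) (use assms in simp)
  finally show ?thesis .
qed

lemma Union_tree_cells:
  assumes "2 \<le> n"
  shows "\<Union>(tree_cells n) = tree_complex n"
proof
  show "\<Union>(tree_cells n) \<subseteq> tree_complex n"
    unfolding tree_cells_def using cell_data.cell_subset_tree_complex by blast
  show "tree_complex n \<subseteq> \<Union>(tree_cells n)"
  proof
    fix E assume "E \<in> tree_complex n"
    then interpret forest_in_tree_complex n E using assms by unfold_locales
    show "E \<in> \<Union>(tree_cells n)" using ex_cell_containing unfolding tree_cells_def by blast
  qed
qed

lemma simp_iso_card_Union: "simp_iso K L \<Longrightarrow> card (\<Union>K) = card (\<Union>L)"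
  unfolding simp_iso_def by (metis card_image image_Union)

lemma (in cell_data) simp_iso_cell_bipyramid_iff:
  assumes "0 < j" "j < n"
  shows "simp_iso (cell n xs p) (bipyramid (simplex_boundary j) (n - j - 1)) \<longleftrightarrow> k = j"
proof
  assume iso: "simp_iso (cell n xs p) (bipyramid (simplex_boundary j) (n - j - 1))"
  have "card (\<Union>(cell n xs p)) = Suc k + 2 * (n - 1 - k)"
    using simp_iso_card_Union[OF simp_iso_cell_bipyramid] card_off_cycle length_pos
    by (simp add: Union_bipyramid_simplex_boundary card_bipyramid_vertices)
  moreover have "card (\<Union>(cell n xs p)) = Suc j + 2 * (n - j - 1)"
    using simp_iso_card_Union[OF iso] assms
    by (simp add: Union_bipyramid_simplex_boundary card_bipyramid_vertices)
  ultimately show "k = j" using assms length_le by linarith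
next
  assume "k = j"
  then show "simp_iso (cell n xs p) (bipyramid (simplex_boundary j) (n - j - 1))"
    using simp_iso_cell_bipyramid card_off_cycle by simp
qed

lemma cell_params_length: "(xs, p) \<in> cell_params n k \<Longrightarrow> length xs = k"
  by (simp add: cell_params_def)

lemma card_tree_cells_bipyramid:
  assumes k: "0 < k" "k < n"
  shows "card {K \<in> tree_cells n. simp_iso K (bipyramid (simplex_boundary k) (n - k - 1))}
         = cell_count (n - 1) k"
proof -
  let ?cell = "\<lambda>(xs, p). cell n xs p"
  have n: "2 \<le> n" using k by simp
  have "{K \<in> tree_cells n. simp_iso K (bipyramid (simplex_boundary k) (n - k - 1))}
        = ?cell ` cell_params n k"
  proof (intro equalityI subsetI)
    fix K assume "K \<in> {K \<in> tree_cells n. simp_iso K (bipyramid (simplex_boundary k) (n - k - 1))}"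
    then obtain xs p where P: "cell_data n xs p" "K = cell n xs p"
      and "simp_iso K (bipyramid (simplex_boundary k) (n - k - 1))"
      unfolding tree_cells_def by blast
    then have "length xs = k" using cell_data.simp_iso_cell_bipyramid_iff[OF P(1) k] by simp
    with P(1) have "(xs, p) \<in> cell_params n k" by (auto simp: cell_data_iff cell_params_length)
    then show "K \<in> ?cell ` cell_params n k" using P(2) by force
  next
    fix K assume "K \<in> ?cell ` cell_params n k"
    then obtain xs p where P: "(xs, p) \<in> cell_params n k" "K = cell n xs p" by auto
    then have "cell_data n xs p" using n k by (auto simp: cell_data_iff)
    then show "K \<in> {K \<in> tree_cells n. simp_iso K (bipyramid (simplex_boundary k) (n - k - 1))}"
      using cell_data.simp_iso_cell_bipyramid_iff[OF _ k] cell_params_length[OF P(1)] P(2)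
      unfolding tree_cells_def by blast
  qed
  moreover have "cell_params n k \<subseteq> (\<Union>j\<in>{1..n-1}. cell_params n j)"
    using k by (intro subsetI UN_I[where a = k]) auto
  then have "inj_on ?cell (cell_params n k)" by (rule inj_on_subset[OF inj_on_cell[OF n]])
  ultimately show ?thesis using card_cell_params k by (simp add: card_image)
qed

theorem mainTheorem4:
  fixes n :: nat
  assumes "n \<ge> 1"
  shows "\<exists>\<F> :: (nat \<times> nat) set set set.
           card \<F> = (n - 1) ^ (n - 1)
         \<and> (\<forall>K\<in>\<F>. subcomplex K (tree_complex n))
         \<and> \<Union>\<F> = tree_complex n
         \<and> (\<forall>K\<in>\<F>. simplicial_sphere K (int n - 2))
         \<and> (\<forall>k. 0 < k \<and> k < n \<longrightarrow>
              real (card {K\<in>\<F>. simp_iso K (bipyramid (simplex_boundary k) (n - k - 1))})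
              = real (fact (n - 1)) / real (fact (n - k - 1)) * real k
                * real (n - 1) powi (int n - int k - 2))"
proof (cases "n = 1")
  case True
  then have "tree_complex n = {{}}"
    by (auto simp: tree_complex_def complete_digraph_edges_def directed_forest_def acyclic_def)
  then show ?thesis
    using True by (intro exI[of _ "{{{}}}"])
      (auto simp: subcomplex_def simplicial_sphere_def simplicial_complex_def)
next
  case False
  then have n: "2 \<le> n" using assms by simp
  show ?thesis
  proof (intro exI[of _ "tree_cells n"] conjI allI impI ballI)
    show "card (tree_cells n) = (n - 1) ^ (n - 1)" by (rule card_tree_cells[OF n])
    show "\<Union>(tree_cells n) = tree_complex n" by (rule Union_tree_cells[OF n])
    fix K assume "K \<in> tree_cells n"
    then obtain xs p where "cell_data n xs p" "K = cell n xs p" unfolding tree_cells_def by blast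
    then show "subcomplex K (tree_complex n)" "simplicial_sphere K (int n - 2)"
      by (simp_all add: subcomplex_def cell_data.simplicial_complex_cell
          cell_data.cell_subset_tree_complex cell_data.simplicial_sphere_cell)
  next
    fix k assume k: "0 < k \<and> k < n"
    then have "1 \<le> k" "k \<le> n - 1" by auto
    with k show "real (card {K \<in> tree_cells n. simp_iso K (bipyramid (simplex_boundary k) (n - k - 1))})
        = real (fact (n - 1)) / real (fact (n - k - 1)) * real k * real (n - 1) powi (int n - int k - 2)"
      using card_tree_cells_bipyramid[of k n] real_cell_count[of k n] n by simp
  qed
qed

end
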